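(* Let $X$ be a connected cubic graph, let $\{u,v\}$ be an edge of $X$, let $G\leq\mathrm{Aut}\,X$ be an $s$-regular group of automorphisms with $s\in\{2,3,5\}$, and let $H=G_u$ be the stabilizer of $u$ in $G$. Then $X$ has a connected $G$-split $2$-cover with a transitive complement if and only if there is an element $b\in G$ interchanging $u$ and $v$ and $H$ has a subgroup $L$ of index $2$ such that $$b^2\in L,\qquad \langle b,L\rangle=G,\qquad |L:L^b\cap L|=3.$$ Moreover, in this case the covering graph is isomorphic to the coset graph $\mathrm{Cos}(G,L,LbL)$.
   Context: Graphs are finite and simple; maps are composed on the right. An $s$-arc is a sequence $(v_0,\dots,v_s)$ of vertices with $v_{i-1}\sim v_i$ and $v_{i-1}\neq v_{i+1}$; $G$ is $s$-regular if it acts regularly on $s$-arcs. A regular covering projection $\wp\colon\tilde X\to X$ is a surjective graph homomorphism, locally bijective on neighbourhoods, whose group $\mathrm{CT}(\wp)$ of covering transformations (automorphisms $c$ with $c\wp=\wp$) acts regularly on fibres; a $2$-cover has $\mathrm{CT}(\wp)\cong\mathbb{Z}_2$. A lift of $g\in\mathrm{Aut}\,X$ is $\tilde g\in\mathrm{Aut}\,\tilde X$ with $\wp g=\tilde g\wp$; $\wp$ is $G$-split if all elements of $G$ lift and $\mathrm{CT}(\wp)$ has a complement $\bar G$ in the lifted group $\tilde G$ (the group of all lifts); a complement is transitive if it is transitive on $V(\tilde X)$. $L^b=b^{-1}Lb$. For a group $G$, subgroup $L$, and a union $D$ of double cosets of $L$ with $D^{-1}=D$, the coset graph $\mathrm{Cos}(G,L,D)$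 has vertex set the right cosets of $L$ in $G$, with $Lg$ adjacent to $Ldg$ for all $d\in D$. *)

theory Defs
  imports "HOL-Algebra.Algebra"
begin

definition sgraph :: "'v set \<Rightarrow> ('v \<Rightarrow> 'v \<Rightarrow> bool) \<Rightarrow> bool" where
  "sgraph V E \<longleftrightarrow> finite V \<and> (\<forall>x y. E x y \<longrightarrow> x \<in> V \<and> y \<in> V)
     \<and> (\<forall>x y. E x y \<longrightarrow> E y x) \<and> (\<forall>x. \<not> E x x)"

definition nbhd :: "('v \<Rightarrow> 'v \<Rightarrow> bool) \<Rightarrow> 'v \<Rightarrow> 'v set" where
  "nbhd E x = {y. E x y}"

definition cubic :: "'v set \<Rightarrow> ('v \<Rightarrow> 'v \<Rightarrow> bool) \<Rightarrow> bool" where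
  "cubic V E \<longleftrightarrow> (\<forall>x\<in>V. card (nbhd E x) = 3)"

definition connected_graph :: "'v set \<Rightarrow> ('v \<Rightarrow> 'v \<Rightarrow> bool) \<Rightarrow> bool" where
  "connected_graph V E \<longleftrightarrow> V \<noteq> {} \<and> (\<forall>x\<in>V. \<forall>y\<in>V. E\<^sup>*\<^sup>* x y)"

definition graph_iso :: "'a set \<Rightarrow> ('a \<Rightarrow> 'a \<Rightarrow> bool) \<Rightarrow> 'b set \<Rightarrow> ('b \<Rightarrow> 'b \<Rightarrow> bool) \<Rightarrow> bool" where
  "graph_iso V1 E1 V2 E2 \<longleftrightarrow>
     (\<exists>f. bij_betw f V1 V2 \<and> (\<forall>x\<in>V1. \<forall>y\<in>V1. E1 x y \<longleftrightarrow> E2 (f x) (f y)))"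

definition graph_aut :: "'v set \<Rightarrow> ('v \<Rightarrow> 'v \<Rightarrow> bool) \<Rightarrow> ('v \<Rightarrow> 'v) set" where
  "graph_aut V E = {f. bij_betw f V V \<and> (\<forall>x. x \<notin> V \<longrightarrow> f x = x)
        \<and> (\<forall>x\<in>V. \<forall>y\<in>V. E x y \<longleftrightarrow> E (f x) (f y))}"

text \<open>A set of permutations as a monoid structure; maps are composed on the right,
so the product g h means "first g, then h", i.e. the function h \<circ> g.\<close>
definition pgrp :: "('v \<Rightarrow> 'v) set \<Rightarrow> ('v \<Rightarrow> 'v) monoid" where
  "pgrp S = \<lparr>carrier = S, monoid.mult = (\<lambda>g h. h \<circ> g), one = id\<rparr>"

definition aut_group :: "'v set \<Rightarrow> ('v \<Rightarrow> 'v \<Rightarrow> bool) \<Rightarrow> ('v \<Rightarrow> 'v) set \<Rightarrow> bool" where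
  "aut_group V E G \<longleftrightarrow> G \<subseteq> graph_aut V E \<and> group (pgrp G)"

definition s_arc :: "'v set \<Rightarrow> ('v \<Rightarrow> 'v \<Rightarrow> bool) \<Rightarrow> nat \<Rightarrow> 'v list \<Rightarrow> bool" where
  "s_arc V E s xs \<longleftrightarrow> length xs = Suc s \<and> set xs \<subseteq> V
     \<and> (\<forall>i<s. E (xs ! i) (xs ! Suc i))
     \<and> (\<forall>i. Suc (Suc i) \<le> s \<longrightarrow> xs ! i \<noteq> xs ! Suc (Suc i))"

definition s_regular :: "'v set \<Rightarrow> ('v \<Rightarrow> 'v \<Rightarrow> bool) \<Rightarrow> nat \<Rightarrow> ('v \<Rightarrow> 'v) set \<Rightarrow> bool" where
  "s_regular V E s G \<longleftrightarrow>
     (\<forall>a b. s_arc V E s a \<and> s_arc V E s b \<longrightarrow> (\<exists>!g. g \<in> G \<and> map g a = b))"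

definition stabilizer :: "('v \<Rightarrow> 'v) set \<Rightarrow> 'v \<Rightarrow> ('v \<Rightarrow> 'v) set" where
  "stabilizer G u = {g\<in>G. g u = u}"

definition covering_proj ::
  "'w set \<Rightarrow> ('w \<Rightarrow> 'w \<Rightarrow> bool) \<Rightarrow> 'v set \<Rightarrow> ('v \<Rightarrow> 'v \<Rightarrow> bool) \<Rightarrow> ('w \<Rightarrow> 'v) \<Rightarrow> bool" where
  "covering_proj Vt Et V E p \<longleftrightarrow>
     p ` Vt = V \<and> (\<forall>x y. Et x y \<longrightarrow> E (p x) (p y))
     \<and> (\<forall>x\<in>Vt. bij_betw p (nbhd Et x) (nbhd E (p x)))"

definition cov_trans ::
  "'w set \<Rightarrow> ('w \<Rightarrow> 'w \<Rightarrow> bool) \<Rightarrow> ('w \<Rightarrow> 'v) \<Rightarrow> ('w \<Rightarrow> 'w) set" where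
  "cov_trans Vt Et p = {c \<in> graph_aut Vt Et. \<forall>x\<in>Vt. p (c x) = p x}"

definition regular_covering ::
  "'w set \<Rightarrow> ('w \<Rightarrow> 'w \<Rightarrow> bool) \<Rightarrow> 'v set \<Rightarrow> ('v \<Rightarrow> 'v \<Rightarrow> bool) \<Rightarrow> ('w \<Rightarrow> 'v) \<Rightarrow> bool" where
  "regular_covering Vt Et V E p \<longleftrightarrow> covering_proj Vt Et V E p
     \<and> (\<forall>x\<in>Vt. \<forall>y\<in>Vt. p x = p y \<longrightarrow> (\<exists>!c. c \<in> cov_trans Vt Et p \<and> c x = y))"

definition two_cover ::
  "'w set \<Rightarrow> ('w \<Rightarrow> 'w \<Rightarrow> bool) \<Rightarrow> 'v set \<Rightarrow> ('v \<Rightarrow> 'v \<Rightarrow> bool) \<Rightarrow> ('w \<Rightarrow> 'v) \<Rightarrow> bool" where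
  "two_cover Vt Et V E p \<longleftrightarrow> sgraph Vt Et \<and> regular_covering Vt Et V E p
     \<and> pgrp (cov_trans Vt Et p) \<cong> integer_mod_group 2"

text \<open>gt is a lift of g: p g = gt p (right composition), i.e. p (gt x) = g (p x).\<close>
definition is_lift ::
  "'w set \<Rightarrow> ('w \<Rightarrow> 'w \<Rightarrow> bool) \<Rightarrow> ('w \<Rightarrow> 'v) \<Rightarrow> ('v \<Rightarrow> 'v) \<Rightarrow> ('w \<Rightarrow> 'w) \<Rightarrow> bool" where
  "is_lift Vt Et p g gt \<longleftrightarrow> gt \<in> graph_aut Vt Et \<and> (\<forall>x\<in>Vt. p (gt x) = g (p x))"

definition lifted_group ::
  "'w set \<Rightarrow> ('w \<Rightarrow> 'w \<Rightarrow> bool) \<Rightarrow> ('w \<Rightarrow> 'v) \<Rightarrow> ('v \<Rightarrow> 'v) set \<Rightarrow> ('w \<Rightarrow> 'w) set" where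
  "lifted_group Vt Et p G = {gt. \<exists>g\<in>G. is_lift Vt Et p g gt}"

definition is_complement ::
  "'w set \<Rightarrow> ('w \<Rightarrow> 'w \<Rightarrow> bool) \<Rightarrow> ('w \<Rightarrow> 'v) \<Rightarrow> ('v \<Rightarrow> 'v) set \<Rightarrow> ('w \<Rightarrow> 'w) set \<Rightarrow> bool" where
  "is_complement Vt Et p G Gb \<longleftrightarrow>
     subgroup Gb (pgrp (lifted_group Vt Et p G))
     \<and> Gb \<inter> cov_trans Vt Et p = {id}
     \<and> cov_trans Vt Et p <#>\<^bsub>pgrp (lifted_group Vt Et p G)\<^esub> Gb = lifted_group Vt Et p G"

definition split_cover_transitive_complement ::
  "'w set \<Rightarrow> ('w \<Rightarrow> 'w \<Rightarrow> bool) \<Rightarrow> 'v set \<Rightarrow> ('v \<Rightarrow> 'v \<Rightarrow> bool) \<Rightarrow> ('v \<Rightarrow> 'v) set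
     \<Rightarrow> ('w \<Rightarrow> 'v) \<Rightarrow> bool" where
  "split_cover_transitive_complement Vt Et V E G p \<longleftrightarrow>
     (\<forall>g\<in>G. \<exists>gt. is_lift Vt Et p g gt)
     \<and> (\<exists>Gb. is_complement Vt Et p G Gb \<and> (\<forall>x\<in>Vt. \<forall>y\<in>Vt. \<exists>c\<in>Gb. c x = y))"

definition good_cover ::
  "'w set \<Rightarrow> ('w \<Rightarrow> 'w \<Rightarrow> bool) \<Rightarrow> 'v set \<Rightarrow> ('v \<Rightarrow> 'v \<Rightarrow> bool) \<Rightarrow> ('v \<Rightarrow> 'v) set
     \<Rightarrow> ('w \<Rightarrow> 'v) \<Rightarrow> bool" where
  "good_cover Vt Et V E G p \<longleftrightarrow> two_cover Vt Et V E p \<and> connected_graph Vt Et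
     \<and> split_cover_transitive_complement Vt Et V E G p"

definition sub_index :: "('v \<Rightarrow> 'v) set \<Rightarrow> ('v \<Rightarrow> 'v) set \<Rightarrow> ('v \<Rightarrow> 'v) set \<Rightarrow> nat" where
  "sub_index G A B = card (rcosets\<^bsub>(pgrp G)\<lparr>carrier := A\<rparr>\<^esub> B)"

definition conj_sub :: "('v \<Rightarrow> 'v) set \<Rightarrow> ('v \<Rightarrow> 'v) set \<Rightarrow> ('v \<Rightarrow> 'v) \<Rightarrow> ('v \<Rightarrow> 'v) set" where
  "conj_sub G L b = {inv\<^bsub>pgrp G\<^esub> b \<otimes>\<^bsub>pgrp G\<^esub> l \<otimes>\<^bsub>pgrp G\<^esub> b | l. l \<in> L}"

definition cos_vertices :: "('v \<Rightarrow> 'v) set \<Rightarrow> ('v \<Rightarrow> 'v) set \<Rightarrow> ('v \<Rightarrow> 'v) set set" where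
  "cos_vertices G L = rcosets\<^bsub>pgrp G\<^esub> L"

definition cos_adj :: "('v \<Rightarrow> 'v) set \<Rightarrow> ('v \<Rightarrow> 'v) set \<Rightarrow> ('v \<Rightarrow> 'v) set
     \<Rightarrow> ('v \<Rightarrow> 'v) set \<Rightarrow> ('v \<Rightarrow> 'v) set \<Rightarrow> bool" where
  "cos_adj G L D A B \<longleftrightarrow> (\<exists>g\<in>G. \<exists>d\<in>D.
      A = L #>\<^bsub>pgrp G\<^esub> g \<and> B = L #>\<^bsub>pgrp G\<^esub> (d \<otimes>\<^bsub>pgrp G\<^esub> g))"

definition double_coset :: "('v \<Rightarrow> 'v) set \<Rightarrow> ('v \<Rightarrow> 'v) set \<Rightarrow> ('v \<Rightarrow> 'v) \<Rightarrow> ('v \<Rightarrow> 'v) set" where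
  "double_coset G L b = L <#>\<^bsub>pgrp G\<^esub> {b} <#>\<^bsub>pgrp G\<^esub> L"

definition cover_condition ::
  "('v \<Rightarrow> 'v) set \<Rightarrow> 'v \<Rightarrow> 'v \<Rightarrow> ('v \<Rightarrow> 'v) \<Rightarrow> ('v \<Rightarrow> 'v) set \<Rightarrow> bool" where
  "cover_condition G u v b L \<longleftrightarrow>
     b \<in> G \<and> b u = v \<and> b v = u
     \<and> subgroup L (pgrp G) \<and> L \<subseteq> stabilizer G u
     \<and> sub_index G (stabilizer G u) L = 2
     \<and> b \<otimes>\<^bsub>pgrp G\<^esub> b \<in> L
     \<and> generate (pgrp G) (insert b L) = G
     \<and> sub_index G L (conj_sub G L b \<inter> L) = 3"

end

(*
  Given b and L, the cover is the coset graph Cos(G, L, LbL). As L has index 2 in H = G_u,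
  there are exactly two right cosets of L over each vertex of X, and they are exchanged by
  left multiplication with an element h0 of H - L fixing v. Since |L : L^b \<inter> L| = 3 and L is
  transitive on the three neighbours of u, the group L^b \<inter> L is the stabiliser of v in L;
  this makes the projection bijective on neighbourhoods. Right multiplication by G gives
  lifts forming a transitive complement of the covering group {id, flip}, and the cover is
  connected because b and L generate G.

  Conversely, in a G-split 2-cover with a transitive complement, every g \<in> G has a unique
  lift into the complement, so G acts on the cover. Take for L the stabiliser of a vertex ut
  over u and for b an element exchanging ut with a neighbour vt over v. The index of L in H
  is the size 2 of the fibre over u, the index of L^b \<inter> L in L is the number 3 of neighbours
  of ut, and connectedness of the cover shows that b and L generate G; the map sending the
  image of ut under g to the coset L g is an isomorphism onto Cos(G, L, LbL).
*)

theory Submission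
  imports Defs
begin

section \<open>Permutation groups and graph automorphisms\<close>

lemma pgrp_carrier [simp]: "carrier (pgrp S) = S"
  by (simp add: pgrp_def)

lemma pgrp_mult: "x \<otimes>\<^bsub>pgrp S\<^esub> y = y \<circ> x"
  by (simp add: pgrp_def)

lemma pgrp_one: "\<one>\<^bsub>pgrp S\<^esub> = id"
  by (simp add: pgrp_def)

lemma pgrp_inv_eqI:
  assumes "y \<in> S" "y \<circ> x = id" "x \<circ> y = id"
  shows "inv\<^bsub>pgrp S\<^esub> x = y"
  unfolding m_inv_def
proof (rule the_equality)
  show "y \<in> carrier (pgrp S) \<and> x \<otimes>\<^bsub>pgrp S\<^esub> y = \<one>\<^bsub>pgrp S\<^esub> \<and> y \<otimes>\<^bsub>pgrp S\<^esub> x = \<one>\<^bsub>pgrp S\<^esub>"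
    using assms by (simp add: pgrp_mult pgrp_one)
  fix z assume "z \<in> carrier (pgrp S) \<and> x \<otimes>\<^bsub>pgrp S\<^esub> z = \<one>\<^bsub>pgrp S\<^esub> \<and> z \<otimes>\<^bsub>pgrp S\<^esub> x = \<one>\<^bsub>pgrp S\<^esub>"
  then have "z = z \<circ> (x \<circ> y)" and "z \<circ> x = id"
    using assms(3) by (simp_all add: pgrp_mult pgrp_one)
  then show "z = y"
    by (simp add: comp_assoc[symmetric])
qed

lemma pgrp_involution_iso_Z2:
  assumes "c \<noteq> id" "c \<circ> c = id"
  shows "pgrp {id, c} \<cong> integer_mod_group 2"
proof (rule is_isoI)
  let ?f = "\<lambda>x. if x = id then (0::int) else 1"
  show "?f \<in> iso (pgrp {id, c}) (integer_mod_group 2)"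
    unfolding iso_def hom_def
  proof (intro CollectI conjI)
    show "?f \<in> carrier (pgrp {id, c}) \<rightarrow> carrier (integer_mod_group 2)"
      by (auto simp: carrier_integer_mod_group)
    show "\<forall>x\<in>carrier (pgrp {id, c}). \<forall>y\<in>carrier (pgrp {id, c}).
        ?f (x \<otimes>\<^bsub>pgrp {id, c}\<^esub> y) = ?f x \<otimes>\<^bsub>integer_mod_group 2\<^esub> ?f y"
      using assms by (auto simp: pgrp_mult)
    show "bij_betw ?f (carrier (pgrp {id, c})) (carrier (integer_mod_group 2))"
      using assms by (auto simp: carrier_integer_mod_group bij_betw_def inj_on_def)
  qed
qed

lemma graph_aut_closed: "f \<in> graph_aut V E \<Longrightarrow> x \<in> V \<Longrightarrow> f x \<in> V"
  by (auto simp: graph_aut_def bij_betw_def)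

lemma graph_aut_outside: "f \<in> graph_aut V E \<Longrightarrow> x \<notin> V \<Longrightarrow> f x = x"
  unfolding graph_aut_def by blast

lemma graph_aut_adj_iff: "f \<in> graph_aut V E \<Longrightarrow> x \<in> V \<Longrightarrow> y \<in> V \<Longrightarrow> E (f x) (f y) = E x y"
  unfolding graph_aut_def by blast

lemma graph_aut_adj: "sgraph V E \<Longrightarrow> f \<in> graph_aut V E \<Longrightarrow> E x y \<Longrightarrow> E (f x) (f y)"
  unfolding graph_aut_def sgraph_def by blast

lemma graph_aut_bij: "f \<in> graph_aut V E \<Longrightarrow> bij f"
proof -
  assume f: "f \<in> graph_aut V E"
  have "bij_betw f (- V) (- V)"
    using bij_betw_cong[of "- V" f id] graph_aut_outside[OF f] by simp
  moreover have "bij_betw f V V"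
    using f by (simp add: graph_aut_def)
  ultimately show "bij f"
    using bij_betw_combine[of f V V "- V" "- V"] by (simp add: Un_commute)
qed

lemma graph_aut_inj: "f \<in> graph_aut V E \<Longrightarrow> f x = f y \<Longrightarrow> x = y"
  using graph_aut_bij bij_is_inj injD by metis

lemma id_graph_aut: "id \<in> graph_aut V E"
  by (simp add: graph_aut_def)

lemma graph_aut_comp: "f \<in> graph_aut V E \<Longrightarrow> g \<in> graph_aut V E \<Longrightarrow> g \<circ> f \<in> graph_aut V E"
proof -
  assume f: "f \<in> graph_aut V E" and g: "g \<in> graph_aut V E"
  have "bij_betw (g \<circ> f) V V"
    using f g by (auto simp: graph_aut_def intro: bij_betw_trans)
  moreover have "E (g (f x)) (g (f y)) = E x y" if "x \<in> V" "y \<in> V" for x y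
    using that graph_aut_adj_iff[OF f] graph_aut_adj_iff[OF g] graph_aut_closed[OF f] by simp
  ultimately show ?thesis
    using graph_aut_outside[OF f] graph_aut_outside[OF g] by (simp add: graph_aut_def)
qed

lemma graph_aut_inv: "f \<in> graph_aut V E \<Longrightarrow> inv_into UNIV f \<in> graph_aut V E"
proof -
  assume f: "f \<in> graph_aut V E"
  let ?g = "inv_into UNIV f"
  have b: "bij f" by (rule graph_aut_bij[OF f])
  have fg: "f (?g x) = x" and gf: "?g (f x) = x" for x
    using b by (simp_all add: bij_is_surj surj_f_inv_f bij_is_inj)
  have outside: "?g x = x" if "x \<notin> V" for x
    using gf[of x] graph_aut_outside[OF f that] by simp
  have closed: "?g x \<in> V" if "x \<in> V" for x
    using fg[of x] graph_aut_outside[OF f, of "?g x"] that by metis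
  have "bij_betw ?g V V"
    by (rule bij_betw_byWitness[where f' = f]) (use fg gf closed graph_aut_closed[OF f] in auto)
  moreover have "E (?g x) (?g y) = E x y" if "x \<in> V" "y \<in> V" for x y
    using graph_aut_adj_iff[OF f closed closed, OF that] fg by simp
  ultimately show ?thesis
    using outside by (auto simp: graph_aut_def)
qed

lemma finite_graph_aut: "finite V \<Longrightarrow> finite (graph_aut V E)"
proof -
  assume fin: "finite V"
  have "inj_on (\<lambda>f. restrict f V) (graph_aut V E)"
    by (rule inj_onI, rule ext) (metis graph_aut_outside restrict_apply')
  moreover have "(\<lambda>f. restrict f V) ` graph_aut V E \<subseteq> V \<rightarrow>\<^sub>E V"
    using graph_aut_closed by auto
  moreover have "finite (V \<rightarrow>\<^sub>E V)"
    using fin by (simp add: finite_PiE)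
  ultimately show ?thesis
    using finite_imageD finite_subset by blast
qed

lemma graph_aut_image_nbhd:
  assumes sg: "sgraph V E" and f: "f \<in> graph_aut V E" and x: "x \<in> V"
  shows "f ` nbhd E x = nbhd E (f x)"
proof
  show "f ` nbhd E x \<subseteq> nbhd E (f x)"
    using graph_aut_adj[OF sg f] by (auto simp: nbhd_def)
  show "nbhd E (f x) \<subseteq> f ` nbhd E x"
  proof
    fix z assume z: "z \<in> nbhd E (f x)"
    then have "z \<in> V" using sg by (simp add: nbhd_def sgraph_def)
    then have "z \<in> f ` V"
      using f by (simp add: graph_aut_def bij_betw_def)
    then obtain y where "y \<in> V" "z = f y"
      by blast
    then show "z \<in> f ` nbhd E x"
      using z graph_aut_adj_iff[OF f x] by (simp add: nbhd_def)
  qed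
qed

section \<open>Coverings\<close>

lemma is_lift_comp:
  "is_lift Vt Et p g \<gamma> \<Longrightarrow> is_lift Vt Et p h \<delta> \<Longrightarrow> is_lift Vt Et p (h \<circ> g) (\<delta> \<circ> \<gamma>)"
  by (auto simp: is_lift_def graph_aut_comp graph_aut_closed)

lemma is_lift_id_iff: "is_lift Vt Et p id \<gamma> \<longleftrightarrow> \<gamma> \<in> cov_trans Vt Et p"
  by (simp add: is_lift_def cov_trans_def)

lemma covering_aut_agree_on_reachable:
  assumes sg: "sgraph Vt Et" and cp: "covering_proj Vt Et V E p"
    and \<gamma>1: "\<gamma>1 \<in> graph_aut Vt Et" and \<gamma>2: "\<gamma>2 \<in> graph_aut Vt Et"
    and same_proj: "\<forall>x\<in>Vt. p (\<gamma>1 x) = p (\<gamma>2 x)"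
    and "\<gamma>1 x0 = \<gamma>2 x0" and "Et\<^sup>*\<^sup>* x0 y"
  shows "\<gamma>1 y = \<gamma>2 y"
  using \<open>Et\<^sup>*\<^sup>* x0 y\<close>
proof (induction rule: rtranclp_induct)
  case base
  show ?case by fact
next
  case (step y z)
  have yz: "y \<in> Vt" "z \<in> Vt"
    using step.hyps(2) sg by (auto simp: sgraph_def)
  have "\<gamma>1 z \<in> nbhd Et (\<gamma>1 y)" "\<gamma>2 z \<in> nbhd Et (\<gamma>1 y)"
    using step graph_aut_adj_iff[OF \<gamma>1 yz] graph_aut_adj_iff[OF \<gamma>2 yz] by (simp_all add: nbhd_def)
  moreover have "inj_on p (nbhd Et (\<gamma>1 y))"
    using cp graph_aut_closed[OF \<gamma>1 yz(1)] by (simp add: covering_proj_def bij_betw_def)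
  ultimately show ?case
    using same_proj yz(2) inj_onD by metis
qed

lemma covering_aut_eqI:
  assumes "sgraph Vt Et" "connected_graph Vt Et" "covering_proj Vt Et V E p"
    and \<gamma>1: "\<gamma>1 \<in> graph_aut Vt Et" and \<gamma>2: "\<gamma>2 \<in> graph_aut Vt Et"
    and "\<forall>x\<in>Vt. p (\<gamma>1 x) = p (\<gamma>2 x)"
    and "x0 \<in> Vt" "\<gamma>1 x0 = \<gamma>2 x0"
  shows "\<gamma>1 = \<gamma>2"
proof
  fix y
  show "\<gamma>1 y = \<gamma>2 y"
  proof (cases "y \<in> Vt")
    case True
    then have "Et\<^sup>*\<^sup>* x0 y"
      using assms(2,7) by (simp add: connected_graph_def)
    then show ?thesis
      by (rule covering_aut_agree_on_reachable[OF assms(1,3-6,8)])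
  next
    case False
    then show ?thesis
      using graph_aut_outside[OF \<gamma>1] graph_aut_outside[OF \<gamma>2] by simp
  qed
qed

section \<open>Indices of subgroups\<close>

lemma (in group) rcos_eq_iff:
  assumes "subgroup K G" "a \<in> carrier G" "b \<in> carrier G"
  shows "K #> a = K #> b \<longleftrightarrow> a \<otimes> inv b \<in> K"
proof
  assume "K #> a = K #> b"
  then have "a \<in> K #> b"
    using rcos_self[OF assms(2,1)] by simp
  then show "a \<otimes> inv b \<in> K"
    using subgroup.rcos_module_imp[OF assms(1) is_group assms(3)] by blast
next
  assume "a \<otimes> inv b \<in> K"
  then have "a \<in> K #> b"
    using subgroup.rcos_module_rev[OF assms(1) is_group assms(3,2)] by blast
  then show "K #> a = K #> b"
    using repr_independence[OF _ assms(3,1)] by simp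
qed

lemma (in group) rcos_eq_self_iff:
  assumes "subgroup K G" "a \<in> carrier G"
  shows "K #> a = K \<longleftrightarrow> a \<in> K"
  using rcos_eq_iff[OF assms one_closed] coset_mult_one[OF subgroup.subset[OF assms(1)]] assms(2)
  by simp

lemma (in group) rcosets_restrict_carrier:
  "rcosets\<^bsub>G\<lparr>carrier := A\<rparr>\<^esub> K = (\<lambda>a. K #> a) ` A"
  by (auto simp: RCOSETS_def r_coset_def)

lemma card_image_eq_if_same_fibres:
  assumes "\<forall>a\<in>A. \<forall>b\<in>A. F a = F b \<longleftrightarrow> f a = f b"
  shows "card (F ` A) = card (f ` A)"
proof -
  let ?P = "(\<lambda>a. (F a, f a)) ` A"
  have "inj_on fst ?P" "inj_on snd ?P"
    using assms by (auto simp: inj_on_def)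
  moreover have "fst ` ?P = F ` A" "snd ` ?P = f ` A"
    by (auto simp: image_image)
  ultimately show ?thesis
    by (metis card_image)
qed

lemma (in group) index_eq_card_image:
  assumes "subgroup A G" "subgroup K G"
    and "\<forall>a\<in>A. \<forall>b\<in>A. a \<otimes> inv b \<in> K \<longleftrightarrow> f a = f b"
  shows "card (rcosets\<^bsub>G\<lparr>carrier := A\<rparr>\<^esub> K) = card (f ` A)"
  unfolding rcosets_restrict_carrier
  using assms rcos_eq_iff[OF assms(2)] subgroup.mem_carrier[OF assms(1)]
  by (intro card_image_eq_if_same_fibres) blast

lemma (in group) subgroup_eq_if_same_index:
  assumes fin: "finite A" and A: "subgroup A G" and K1: "subgroup K1 G" and K2: "subgroup K2 G"
    and "K1 \<subseteq> K2" "K2 \<subseteq> A"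
    and same_index: "card (rcosets\<^bsub>G\<lparr>carrier := A\<rparr>\<^esub> K1) = card (rcosets\<^bsub>G\<lparr>carrier := A\<rparr>\<^esub> K2)"
  shows "K1 = K2"
proof -
  let ?A = "G\<lparr>carrier := A\<rparr>"
  have "group ?A" by (rule subgroup_imp_group[OF A])
  then have "card (rcosets\<^bsub>?A\<^esub> K1) * card K1 = card A"
    "card (rcosets\<^bsub>?A\<^esub> K2) * card K2 = card A"
    using group.lagrange subgroup_incl[OF K1 A] subgroup_incl[OF K2 A] assms(5,6)
    by (fastforce simp: order_def)+
  moreover have "card A \<noteq> 0"
    using fin subgroup.one_closed[OF A] by auto
  ultimately have "card K1 = card K2"
    using same_index by (metis mult_cancel1 mult_is_0)
  then show ?thesis
    using assms(5,6) fin by (meson card_subset_eq finite_subset)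
qed

lemma (in group)
  assumes A: "subgroup A G" and K: "subgroup K G" and "K \<subseteq> A"
    and index_two: "card (rcosets\<^bsub>G\<lparr>carrier := A\<rparr>\<^esub> K) = 2"
  shows index_two_exists_outside: "\<exists>h\<in>A. h \<notin> K"
    and index_two_outside_mem: "\<lbrakk>h \<in> A; h' \<in> A; h \<notin> K; h' \<notin> K\<rbrakk> \<Longrightarrow> h \<otimes> inv h' \<in> K"
proof -
  have carr: "a \<in> carrier G" if "a \<in> A" for a
    using subgroup.mem_carrier[OF A that] .
  have coset_K: "K #> a = K \<longleftrightarrow> a \<in> K" if "a \<in> A" for a
    using rcos_eq_self_iff[OF K carr[OF that]] .
  let ?S = "(\<lambda>a. K #> a) ` A"
  have "card ?S = 2"
    using index_two by (simp add: rcosets_restrict_carrier)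
  then obtain x y where xy: "?S = {x, y}" "x \<noteq> y"
    by (meson card_2_iff)
  have "K \<in> ?S"
    using coset_K[OF subgroup.one_closed[OF A]] subgroup.one_closed[OF A] subgroup.one_closed[OF K]
    by (metis image_eqI)
  obtain Z where Z: "?S = {K, Z}" "Z \<noteq> K"
  proof (cases "x = K")
    case True
    then show ?thesis using that xy by blast
  next
    case False
    then have "y = K" using \<open>K \<in> ?S\<close> xy by blast
    then show ?thesis using that xy False by (simp add: insert_commute)
  qed
  have coset_Z: "K #> h = Z" if "h \<in> A" "h \<notin> K" for h
  proof -
    have "K #> h \<in> {K, Z}" using Z(1) that(1) by blast
    then show ?thesis using coset_K that by blast
  qed
  have "Z \<in> ?S" using Z(1) by blast
  then obtain g where "g \<in> A" "Z = K #> g" by blast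
  then show "\<exists>h\<in>A. h \<notin> K"
    using coset_K Z(2) by blast
  assume "h \<in> A" "h' \<in> A" "h \<notin> K" "h' \<notin> K"
  then have "K #> h = K #> h'"
    using coset_Z by simp
  then show "h \<otimes> inv h' \<in> K"
    using rcos_eq_iff[OF K carr carr] \<open>h \<in> A\<close> \<open>h' \<in> A\<close> by blast
qed

lemma (in group) index_two_mult_mem_iff:
  assumes A: "subgroup A G" and K: "subgroup K G" and "K \<subseteq> A"
    and "card (rcosets\<^bsub>G\<lparr>carrier := A\<rparr>\<^esub> K) = 2"
    and h: "h \<in> A" "h \<notin> K" and c: "c \<in> A"
  shows "h \<otimes> c \<in> K \<longleftrightarrow> c \<notin> K"
proof
  assume hc: "h \<otimes> c \<in> K"
  show "c \<notin> K"
  proof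
    assume "c \<in> K"
    then have "(h \<otimes> c) \<otimes> inv c \<in> K"
      using hc subgroup.m_closed[OF K] subgroup.m_inv_closed[OF K] by blast
    moreover have "(h \<otimes> c) \<otimes> inv c = h"
      using subgroup.mem_carrier[OF A] h(1) c by (simp add: m_assoc)
    ultimately show False
      using h(2) by simp
  qed
next
  assume "c \<notin> K"
  have c_carr: "c \<in> carrier G"
    using subgroup.mem_carrier[OF A c] .
  have "inv c \<in> A"
    using subgroup.m_inv_closed[OF A c] .
  moreover have "inv c \<notin> K"
    using subgroup.m_inv_closed[OF K, of "inv c"] \<open>c \<notin> K\<close> c_carr by auto
  ultimately have "h \<otimes> inv (inv c) \<in> K"
    using index_two_outside_mem[OF assms(1-4) h(1)] h(2) by blast
  then show "h \<otimes> c \<in> K"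
    using c_carr by simp
qed

lemma (in group) index_two_quotient_mem_iff:
  assumes A: "subgroup A G" and K: "subgroup K G" and "K \<subseteq> A"
    and "card (rcosets\<^bsub>G\<lparr>carrier := A\<rparr>\<^esub> K) = 2" and c: "c \<in> A" "c' \<in> A"
  shows "c \<otimes> inv c' \<in> K \<longleftrightarrow> (c \<in> K \<longleftrightarrow> c' \<in> K)"
proof -
  have carr: "c \<in> carrier G" "c' \<in> carrier G"
    using c subgroup.mem_carrier[OF A] by auto
  have inv_mem: "inv c' \<in> K \<longleftrightarrow> c' \<in> K"
    using subgroup.m_inv_closed[OF K] carr(2) by (metis inv_inv)
  show ?thesis
  proof (cases "c \<in> K")
    case True
    have "c \<otimes> inv c' \<in> K \<longleftrightarrow> inv c' \<in> K"
    proof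
      assume "c \<otimes> inv c' \<in> K"
      then have "inv c \<otimes> (c \<otimes> inv c') \<in> K"
        using True subgroup.m_closed[OF K] subgroup.m_inv_closed[OF K] by blast
      then show "inv c' \<in> K"
        using carr by (simp add: m_assoc[symmetric])
    qed (use True subgroup.m_closed[OF K] in blast)
    then show ?thesis using True inv_mem by blast
  next
    case False
    then show ?thesis
      using index_two_mult_mem_iff[OF assms(1-4) c(1) False] subgroup.m_inv_closed[OF A c(2)] inv_mem
      by blast
  qed
qed

lemma (in group) index_two_square_mem:
  assumes "subgroup A G" "subgroup K G" "K \<subseteq> A"
    and "card (rcosets\<^bsub>G\<lparr>carrier := A\<rparr>\<^esub> K) = 2" and "h \<in> A"
  shows "h \<otimes> h \<in> K"
proof (cases "h \<in> K")
  case True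
  then show ?thesis using subgroup.m_closed[OF assms(2)] by blast
next
  case False
  then show ?thesis using index_two_mult_mem_iff[OF assms(1-5) False assms(5)] by blast
qed

lemma (in group) index_two_conj_mem:
  assumes A: "subgroup A G" and K: "subgroup K G" and "K \<subseteq> A"
    and "card (rcosets\<^bsub>G\<lparr>carrier := A\<rparr>\<^esub> K) = 2" and h: "h \<in> A" and l: "l \<in> K"
  shows "h \<otimes> l \<otimes> inv h \<in> K"
proof (cases "h \<in> K")
  case True
  then show ?thesis
    using l subgroup.m_closed[OF K] subgroup.m_inv_closed[OF K] by blast
next
  case False
  have "l \<in> A" using l \<open>K \<subseteq> A\<close> by blast
  then have "h \<otimes> l \<in> A" "h \<otimes> l \<notin> K"
    using subgroup.m_closed[OF A h] index_two_mult_mem_iff[OF assms(1-4) h False] l by blast+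
  then show ?thesis
    using index_two_outside_mem[OF assms(1-4) _ h _ False] by blast
qed

section \<open>Groups acting regularly on the s-arcs of a cubic graph\<close>

locale s_regular_cubic_graph =
  fixes V :: "'v set" and E :: "'v \<Rightarrow> 'v \<Rightarrow> bool" and G :: "('v \<Rightarrow> 'v) set"
    and u v :: 'v and s :: nat
  assumes sgraph: "sgraph V E" and cubic: "cubic V E" and edge_uv: "E u v"
    and aut_group: "aut_group V E G" and two_le_s: "2 \<le> s" and s_regular: "s_regular V E s G"

sublocale s_regular_cubic_graph \<subseteq> Gr: group "pgrp G"
  using aut_group by (simp add: aut_group_def)

context s_regular_cubic_graph
begin

abbreviation gmult (infixl "\<cdot>" 70) where "a \<cdot> b \<equiv> a \<otimes>\<^bsub>pgrp G\<^esub> b"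
abbreviation ginv where "ginv a \<equiv> inv\<^bsub>pgrp G\<^esub> a"
abbreviation H where "H \<equiv> stabilizer G u"

lemma G_aut: "g \<in> G \<Longrightarrow> g \<in> graph_aut V E"
  using aut_group by (auto simp: aut_group_def)

lemma mult_apply: "(a \<cdot> b) x = b (a x)"
  by (simp add: pgrp_mult)

lemma one_eq_id: "\<one>\<^bsub>pgrp G\<^esub> = id"
  by (simp add: pgrp_one)

lemma id_in_G: "id \<in> G"
  using Gr.one_closed by (simp add: pgrp_one)

lemma ginv_closed: "g \<in> G \<Longrightarrow> ginv g \<in> G"
  using Gr.inv_closed by simp

lemma gmult_closed: "a \<in> G \<Longrightarrow> b \<in> G \<Longrightarrow> a \<cdot> b \<in> G"
  using Gr.m_closed by simp

lemma ginv_apply: "g \<in> G \<Longrightarrow> ginv g (g x) = x"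
  using Gr.r_inv[of g] by (metis mult_apply one_eq_id id_apply pgrp_carrier)

lemma apply_ginv: "g \<in> G \<Longrightarrow> g (ginv g x) = x"
  using Gr.l_inv[of g] by (metis mult_apply one_eq_id id_apply pgrp_carrier)

lemmas apply_simps = mult_apply ginv_apply apply_ginv

lemma ginv_mult: "a \<in> G \<Longrightarrow> b \<in> G \<Longrightarrow> ginv (a \<cdot> b) = ginv b \<cdot> ginv a"
  using Gr.inv_mult_group by simp

lemma ginv_ginv: "a \<in> G \<Longrightarrow> ginv (ginv a) = a"
  using Gr.inv_inv by simp

lemma ginv_eqI: "g \<in> G \<Longrightarrow> (\<And>x. f (g x) = x) \<Longrightarrow> ginv g = f"
  by (rule ext) (metis apply_ginv)

lemma G_closed: "g \<in> G \<Longrightarrow> x \<in> V \<Longrightarrow> g x \<in> V"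
  by (rule graph_aut_closed[OF G_aut])

lemma G_inj: "g \<in> G \<Longrightarrow> g x = g y \<Longrightarrow> x = y"
  by (rule graph_aut_inj[OF G_aut])

lemma G_adj: "g \<in> G \<Longrightarrow> E x y \<Longrightarrow> E (g x) (g y)"
  by (rule graph_aut_adj[OF sgraph G_aut])

lemma edge_in_V: "E x y \<Longrightarrow> x \<in> V \<and> y \<in> V"
  using sgraph by (simp add: sgraph_def)

lemma edge_sym: "E x y \<Longrightarrow> E y x"
  using sgraph by (simp add: sgraph_def)

lemma u_in_V: "u \<in> V" and u_neq_v: "u \<noteq> v"
  using edge_in_V edge_uv sgraph by (auto simp: sgraph_def)

lemma finite_G: "finite G"
  using sgraph G_aut finite_graph_aut finite_subset by (metis sgraph_def subsetI)

lemma card_nbhd: "x \<in> V \<Longrightarrow> card (nbhd E x) = 3"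
  using cubic by (simp add: cubic_def)

lemma stabilizer_G: "h \<in> H \<Longrightarrow> h \<in> G" and stabilizer_fixes: "h \<in> H \<Longrightarrow> h u = u"
  by (auto simp: stabilizer_def)

lemma s_arc_snoc:
  assumes arc: "s_arc V E k xs"
  shows "\<exists>y. s_arc V E (Suc k) (xs @ [y])"
proof -
  have len: "length xs = Suc k" and sub: "set xs \<subseteq> V"
    and adj: "\<forall>i<k. E (xs ! i) (xs ! Suc i)"
    and nobacktrack: "\<forall>i. Suc (Suc i) \<le> k \<longrightarrow> xs ! i \<noteq> xs ! Suc (Suc i)"
    using arc by (auto simp: s_arc_def)
  let ?x = "xs ! k"
  have "?x \<in> V" using len sub by auto
  then have "card (nbhd E ?x - {xs ! (k - 1)}) \<ge> 2"
    using card_nbhd by (simp add: card_Diff_singleton_if)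
  then obtain y where y: "E ?x y" "y \<noteq> xs ! (k - 1)"
    by (metis Diff_iff card.empty ex_in_conv mem_Collect_eq nbhd_def not_numeral_le_zero singletonI)
  have "s_arc V E (Suc k) (xs @ [y])"
    unfolding s_arc_def
  proof (intro conjI allI impI)
    show "length (xs @ [y]) = Suc (Suc k)" using len by simp
    show "set (xs @ [y]) \<subseteq> V" using sub y(1) edge_in_V by auto
  next
    fix i assume "i < Suc k"
    then show "E ((xs @ [y]) ! i) ((xs @ [y]) ! Suc i)"
      using adj len y(1) by (cases "i < k") (auto simp: nth_append elim: less_SucE)
  next
    fix i assume i: "Suc (Suc i) \<le> Suc k"
    show "(xs @ [y]) ! i \<noteq> (xs @ [y]) ! Suc (Suc i)"
    proof (cases "Suc (Suc i) \<le> k")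
      case True
      then show ?thesis using nobacktrack len by (simp add: nth_append)
    next
      case False
      then have "i = k - 1" "i < k" using i by auto
      then show ?thesis using y(2) len by (simp add: nth_append)
    qed
  qed
  then show ?thesis by blast
qed

lemma s_arc_extend:
  assumes "s_arc V E k xs" "k \<le> m"
  shows "\<exists>ys. s_arc V E m (xs @ ys)"
  using assms(2)
proof (induction m)
  case 0
  then show ?case using assms(1) by (intro exI[of _ "[]"]) simp
next
  case (Suc m)
  show ?case
  proof (cases "k = Suc m")
    case True
    then show ?thesis using assms(1) by (intro exI[of _ "[]"]) simp
  next
    case False
    then obtain ys where "s_arc V E m (xs @ ys)" using Suc by auto
    then obtain y where "s_arc V E (Suc m) ((xs @ ys) @ [y])" using s_arc_snoc by blast
    then show ?thesis by (intro exI[of _ "ys @ [y]"]) simp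
  qed
qed

text \<open>Every k-arc with k \<le> s extends to an s-arc since X is cubic, so G is transitive on k-arcs.\<close>

lemma s_arc_transitive:
  assumes "s_arc V E k xs" "s_arc V E k xs'" "k \<le> s"
  shows "\<exists>g\<in>G. map g xs = xs'"
proof -
  obtain ys ys' where "s_arc V E s (xs @ ys)" "s_arc V E s (xs' @ ys')"
    using s_arc_extend assms by metis
  then obtain g where "g \<in> G" "map g (xs @ ys) = xs' @ ys'"
    using s_regular unfolding s_regular_def by blast
  moreover have "length (map g xs) = length xs'"
    using assms by (simp add: s_arc_def)
  ultimately show ?thesis by auto
qed

lemma vertex_transitive: "x \<in> V \<Longrightarrow> \<exists>g\<in>G. g u = x"
  using s_arc_transitive[of 0 "[u]" "[x]"] u_in_V by (auto simp: s_arc_def)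

lemma two_arc_transitive:
  assumes "E w1 u" "E u w2" "w1 \<noteq> w2" "E w1' u" "E u w2'" "w1' \<noteq> w2'"
  shows "\<exists>g\<in>G. g w1 = w1' \<and> g u = u \<and> g w2 = w2'"
proof -
  have "s_arc V E 2 [w1, u, w2]" "s_arc V E 2 [w1', u, w2']"
    using assms edge_in_V by (auto simp: s_arc_def less_Suc_eq numeral_2_eq_2 le_Suc_eq)
  then show ?thesis
    using s_arc_transitive[of 2 "[w1, u, w2]" "[w1', u, w2']"] two_le_s by auto
qed

lemma stabilizer_subgroup: "subgroup H (pgrp G)"
proof (rule Gr.subgroupI)
  show "H \<subseteq> carrier (pgrp G)" "H \<noteq> {}"
    using id_in_G by (auto simp: stabilizer_def)
  fix a b assume "a \<in> H" "b \<in> H"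
  then show "ginv a \<in> H" "a \<cdot> b \<in> H"
    using ginv_closed gmult_closed ginv_apply[of a u] by (auto simp: stabilizer_def mult_apply)
qed

lemma subgroup_in_G: "subgroup L (pgrp G) \<Longrightarrow> l \<in> L \<Longrightarrow> l \<in> G"
  using subgroup.mem_carrier by force

lemma conj_sub_subgroup:
  assumes b: "b \<in> G" and L: "subgroup L (pgrp G)"
  shows "subgroup (conj_sub G L b) (pgrp G)"
proof (rule Gr.subgroupI)
  show "conj_sub G L b \<subseteq> carrier (pgrp G)"
    using subgroup_in_G[OF L] b ginv_closed gmult_closed by (auto simp: conj_sub_def)
  show "conj_sub G L b \<noteq> {}"
    using subgroup.one_closed[OF L] by (auto simp: conj_sub_def)
  fix x y assume "x \<in> conj_sub G L b" "y \<in> conj_sub G L b"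
  then obtain l l' where l: "l \<in> L" "x = ginv b \<cdot> l \<cdot> b" and l': "l' \<in> L" "y = ginv b \<cdot> l' \<cdot> b"
    by (auto simp: conj_sub_def)
  have "ginv x = ginv b \<cdot> ginv l \<cdot> b"
    using l subgroup_in_G[OF L l(1)] b
    by (intro ginv_eqI) (auto simp: apply_simps gmult_closed ginv_closed)
  then show "ginv x \<in> conj_sub G L b"
    using subgroup.m_inv_closed[OF L l(1)] by (auto simp: conj_sub_def)
  have "x \<cdot> y = ginv b \<cdot> (l \<cdot> l') \<cdot> b"
    using l l' b by (intro ext) (simp add: apply_simps)
  then show "x \<cdot> y \<in> conj_sub G L b"
    using subgroup.m_closed[OF L l(1) l'(1)] by (auto simp: conj_sub_def)
qed

lemma point_stabilizer_subgroup:
  assumes L: "subgroup L (pgrp G)"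
  shows "subgroup {l \<in> L. l w = w} (pgrp G)"
proof (rule Gr.subgroupI)
  show "{l \<in> L. l w = w} \<subseteq> carrier (pgrp G)" "{l \<in> L. l w = w} \<noteq> {}"
    using subgroup_in_G[OF L] subgroup.one_closed[OF L] by (auto simp: one_eq_id)
  fix a b assume "a \<in> {l \<in> L. l w = w}" "b \<in> {l \<in> L. l w = w}"
  then show "ginv a \<in> {l \<in> L. l w = w}" "a \<cdot> b \<in> {l \<in> L. l w = w}"
    using subgroup.m_inv_closed[OF L] subgroup.m_closed[OF L] ginv_apply[OF subgroup_in_G[OF L], of a w]
    by (auto simp: mult_apply)
qed

text \<open>By 2-arc transitivity some h \<in> H acts on the three neighbours of u as a 3-cycle;
  then so does h \<cdot> h \<in> L.\<close>

lemma nbhd_orbit: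
  assumes L: "subgroup L (pgrp G)" and "L \<subseteq> H" and squares: "\<forall>h\<in>H. h \<cdot> h \<in> L"
  shows "(\<lambda>l. l v) ` L = nbhd E u"
proof
  show "(\<lambda>l. l v) ` L \<subseteq> nbhd E u"
    using G_adj[OF subgroup_in_G[OF L] edge_uv] stabilizer_fixes \<open>L \<subseteq> H\<close>
    by (fastforce simp: nbhd_def)
next
  obtain w1 w2 w3 where N: "nbhd E u = {w1, w2, w3}" "w1 \<noteq> w2" "w2 \<noteq> w3" "w1 \<noteq> w3"
    using card_nbhd[OF u_in_V] card_3_iff by metis
  have e: "E u w1" "E u w2" "E u w3" using N(1) by (auto simp: nbhd_def)
  obtain h where h: "h \<in> G" "h w1 = w2" "h u = u" "h w2 = w3"
    using two_arc_transitive[of w1 w2 w2 w3] e edge_sym N by blast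
  have "h w3 \<in> nbhd E u" using G_adj[OF h(1) e(3)] h(3) by (simp add: nbhd_def)
  moreover have "h w3 \<noteq> w2" "h w3 \<noteq> w3" using h G_inj N by metis+
  ultimately have "h w3 = w1" using N(1) by blast
  define k where "k = h \<cdot> h"
  have k: "k w1 = w3" "k w2 = w1" "k w3 = w2" "(k \<cdot> k) w1 = w2" "(k \<cdot> k) w2 = w3" "(k \<cdot> k) w3 = w1"
    using h \<open>h w3 = w1\<close> by (simp_all add: k_def mult_apply)
  have "k \<in> L" using squares h by (simp add: k_def stabilizer_def)
  then have cycle: "{id, k, k \<cdot> k} \<subseteq> L"
    using subgroup.m_closed[OF L] subgroup.one_closed[OF L] by (simp add: one_eq_id)
  have "v \<in> {w1, w2, w3}"
    using edge_uv N(1)[symmetric] by (simp add: nbhd_def)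
  show "nbhd E u \<subseteq> (\<lambda>l. l v) ` L"
  proof
    fix w assume "w \<in> nbhd E u"
    then have "\<exists>l\<in>{id, k, k \<cdot> k}. l v = w"
      using \<open>v \<in> {w1, w2, w3}\<close> N(1) k by auto
    then show "w \<in> (\<lambda>l. l v) ` L"
      using cycle by blast
  qed
qed

lemma double_coset_eq: "double_coset G L b = {l \<cdot> b \<cdot> l' | l l'. l \<in> L \<and> l' \<in> L}"
  by (auto simp: double_coset_def set_mult_def)

end

section \<open>The coset graph is a split cover\<close>

locale coset_cover = s_regular_cubic_graph +
  fixes b and L
  assumes cover_condition: "cover_condition G u v b L"
begin

abbreviation D where "D \<equiv> double_coset G L b"

lemma b_in_G: "b \<in> G" and b_u: "b u = v" and b_v: "b v = u"
  and L_subgroup: "subgroup L (pgrp G)" and L_sub_H: "L \<subseteq> H"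
  and index_H_L: "card (rcosets\<^bsub>(pgrp G)\<lparr>carrier := H\<rparr>\<^esub> L) = 2"
  and bb_in_L: "b \<cdot> b \<in> L" and generate_b_L: "generate (pgrp G) (insert b L) = G"
  and index_L_conj: "card (rcosets\<^bsub>(pgrp G)\<lparr>carrier := L\<rparr>\<^esub> (conj_sub G L b \<inter> L)) = 3"
  using cover_condition by (auto simp: cover_condition_def sub_index_def)

lemma L_in_G: "l \<in> L \<Longrightarrow> l \<in> G"
  by (rule subgroup_in_G[OF L_subgroup])

lemma L_fixes_u: "l \<in> L \<Longrightarrow> l u = u"
  using L_sub_H stabilizer_fixes by blast

lemma L_mult: "l \<in> L \<Longrightarrow> l' \<in> L \<Longrightarrow> l \<cdot> l' \<in> L"
  using subgroup.m_closed[OF L_subgroup] by simp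

lemma L_inv: "l \<in> L \<Longrightarrow> ginv l \<in> L"
  using subgroup.m_inv_closed[OF L_subgroup] by simp

lemma id_in_L: "id \<in> L"
  using subgroup.one_closed[OF L_subgroup] by (simp add: one_eq_id)

lemmas index_two_H_L = stabilizer_subgroup L_subgroup L_sub_H index_H_L

lemma H_quotient_mem_iff: "c \<in> H \<Longrightarrow> c' \<in> H \<Longrightarrow> c \<cdot> ginv c' \<in> L \<longleftrightarrow> (c \<in> L \<longleftrightarrow> c' \<in> L)"
  by (rule Gr.index_two_quotient_mem_iff[OF index_two_H_L])

lemma H_conj_L: "h \<in> H \<Longrightarrow> l \<in> L \<Longrightarrow> h \<cdot> l \<cdot> ginv h \<in> L"
  by (rule Gr.index_two_conj_mem[OF index_two_H_L])

lemma L_nbhd_orbit: "(\<lambda>l. l v) ` L = nbhd E u"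
  using nbhd_orbit[OF L_subgroup L_sub_H] Gr.index_two_square_mem[OF index_two_H_L] by blast

text \<open>Both groups have index 3 in L: the first by hypothesis, the second because L acts
  transitively on the three neighbours of u.\<close>

lemma conj_inter_eq_stabilizer_v: "conj_sub G L b \<inter> L = {l \<in> L. l v = v}"
proof (rule Gr.subgroup_eq_if_same_index[OF _ L_subgroup])
  show "finite L"
    using finite_G L_in_G by (meson finite_subset subsetI)
  show "subgroup (conj_sub G L b \<inter> L) (pgrp G)"
    by (rule Gr.subgroups_Inter_pair[OF conj_sub_subgroup[OF b_in_G L_subgroup] L_subgroup])
  show "subgroup {l \<in> L. l v = v} (pgrp G)"
    by (rule point_stabilizer_subgroup[OF L_subgroup])
  show "conj_sub G L b \<inter> L \<subseteq> {l \<in> L. l v = v}"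
  proof
    fix x assume "x \<in> conj_sub G L b \<inter> L"
    then obtain l where "l \<in> L" "x = ginv b \<cdot> l \<cdot> b" "x \<in> L"
      by (auto simp: conj_sub_def)
    moreover have "ginv b v = u"
      using ginv_apply[OF b_in_G, of u] b_u by simp
    ultimately show "x \<in> {l \<in> L. l v = v}"
      using L_fixes_u[of l] b_u by (simp add: mult_apply)
  qed
  have "card (rcosets\<^bsub>(pgrp G)\<lparr>carrier := L\<rparr>\<^esub> {l \<in> L. l v = v}) = card ((\<lambda>l. l v) ` L)"
  proof (rule Gr.index_eq_card_image[OF L_subgroup point_stabilizer_subgroup[OF L_subgroup]])
    show "\<forall>a\<in>L. \<forall>c\<in>L. a \<cdot> ginv c \<in> {l \<in> L. l v = v} \<longleftrightarrow> a v = c v"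
    proof (intro ballI)
      fix a c assume "a \<in> L" "c \<in> L"
      moreover have "ginv c (a v) = v \<longleftrightarrow> a v = c v"
        using ginv_apply[OF L_in_G[OF \<open>c \<in> L\<close>]] apply_ginv[OF L_in_G[OF \<open>c \<in> L\<close>]] by metis
      ultimately show "a \<cdot> ginv c \<in> {l \<in> L. l v = v} \<longleftrightarrow> a v = c v"
        using L_mult L_inv by (simp add: mult_apply)
    qed
  qed
  then show "card (rcosets\<^bsub>(pgrp G)\<lparr>carrier := L\<rparr>\<^esub> (conj_sub G L b \<inter> L))
      = card (rcosets\<^bsub>(pgrp G)\<lparr>carrier := L\<rparr>\<^esub> {l \<in> L. l v = v})"
    using index_L_conj L_nbhd_orbit card_nbhd[OF u_in_V] by simp
qed blast

lemma conj_b_mem: "m \<in> L \<Longrightarrow> m v = v \<Longrightarrow> b \<cdot> m \<cdot> ginv b \<in> L"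
proof -
  assume "m \<in> L" "m v = v"
  then have "m \<in> conj_sub G L b"
    using conj_inter_eq_stabilizer_v by blast
  then obtain l where "l \<in> L" "m = ginv b \<cdot> l \<cdot> b"
    by (auto simp: conj_sub_def)
  moreover have "b \<cdot> (ginv b \<cdot> l \<cdot> b) \<cdot> ginv b = l" if "l \<in> L" for l
    using b_in_G L_in_G[OF that] by (intro ext) (simp add: apply_simps)
  ultimately show ?thesis by simp
qed

lemma mem_D_iff: "d \<in> D \<longleftrightarrow> (\<exists>l1\<in>L. \<exists>l2\<in>L. d = l1 \<cdot> b \<cdot> l2)"
  unfolding double_coset_eq by blast

lemma b_in_D: "b \<in> D"
proof -
  have "id \<cdot> b \<cdot> id = b" by (intro ext) (simp add: mult_apply)
  then show ?thesis using id_in_L mem_D_iff by metis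
qed

lemma L_mult_D_mult_L: "l \<in> L \<Longrightarrow> d \<in> D \<Longrightarrow> l' \<in> L \<Longrightarrow> l \<cdot> d \<cdot> l' \<in> D"
proof -
  assume l: "l \<in> L" "l' \<in> L" and "d \<in> D"
  then obtain l1 l2 where d: "l1 \<in> L" "l2 \<in> L" "d = l1 \<cdot> b \<cdot> l2"
    by (auto simp: mem_D_iff)
  have "l \<cdot> d \<cdot> l' = (l \<cdot> l1) \<cdot> b \<cdot> (l2 \<cdot> l')"
    unfolding d(3) by (intro ext) (simp add: mult_apply)
  then show ?thesis
    using L_mult l d mem_D_iff by metis
qed

lemma D_conj_L_iff: "x \<in> G \<Longrightarrow> l \<in> L \<Longrightarrow> l' \<in> L \<Longrightarrow> l \<cdot> x \<cdot> ginv l' \<in> D \<longleftrightarrow> x \<in> D"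
proof
  assume x: "x \<in> G" and l: "l \<in> L" "l' \<in> L" and "l \<cdot> x \<cdot> ginv l' \<in> D"
  then have "ginv l \<cdot> (l \<cdot> x \<cdot> ginv l') \<cdot> l' \<in> D"
    using L_mult_D_mult_L L_inv by blast
  moreover have "ginv l \<cdot> (l \<cdot> x \<cdot> ginv l') \<cdot> l' = x"
    using x L_in_G l by (intro ext) (simp add: apply_simps)
  ultimately show "x \<in> D" by simp
qed (use L_mult_D_mult_L L_inv in blast)

lemma ginv_D: "d \<in> D \<Longrightarrow> ginv d \<in> D"
proof -
  assume "d \<in> D"
  then obtain l1 l2 where d: "l1 \<in> L" "l2 \<in> L" "d = l1 \<cdot> b \<cdot> l2"
    by (auto simp: mem_D_iff)
  have "ginv d = (ginv l2 \<cdot> ginv (b \<cdot> b)) \<cdot> b \<cdot> ginv l1"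
    unfolding d(3) using L_in_G d b_in_G
    by (intro ginv_eqI) (auto simp: apply_simps ginv_mult[OF b_in_G b_in_G] gmult_closed ginv_closed)
  then show ?thesis
    using L_mult L_inv bb_in_L d mem_D_iff by metis
qed

lemma id_notin_D: "id \<notin> D"
proof
  assume "id \<in> D"
  then obtain l1 l2 where d: "l1 \<in> L" "l2 \<in> L" "id = l1 \<cdot> b \<cdot> l2"
    by (auto simp: mem_D_iff)
  have "l2 u = (l1 \<cdot> b \<cdot> l2) u"
    using L_fixes_u[OF d(2)] d(3) by (metis id_apply)
  then have "l2 v = l2 u"
    using L_fixes_u[OF d(1)] b_u by (simp add: mult_apply)
  then show False
    using G_inj[OF L_in_G[OF d(2)]] u_neq_v by blast
qed

definition h0 where "h0 = (SOME h. h \<in> H \<and> h \<notin> L \<and> h v = v)"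

lemma exists_outside_L_fixing_v: "\<exists>h. h \<in> H \<and> h \<notin> L \<and> h v = v"
proof -
  obtain h where h: "h \<in> H" "h \<notin> L"
    using Gr.index_two_exists_outside[OF index_two_H_L] by blast
  have "h v \<in> nbhd E u"
    using G_adj[OF stabilizer_G[OF h(1)] edge_uv] stabilizer_fixes[OF h(1)] by (simp add: nbhd_def)
  then obtain l where l: "l \<in> L" "l v = h v"
    using L_nbhd_orbit by (metis imageE)
  have "h \<cdot> ginv l \<in> H"
    using h(1) L_inv[OF l(1)] L_sub_H subgroup.m_closed[OF stabilizer_subgroup] by blast
  moreover have "h \<cdot> ginv l \<notin> L"
    using H_quotient_mem_iff[OF h(1)] l(1) L_sub_H h(2) by blast
  moreover have "(h \<cdot> ginv l) v = v"
    using l(2)[symmetric] ginv_apply[OF L_in_G[OF l(1)]] by (simp add: mult_apply)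
  ultimately show ?thesis by blast
qed

lemma h0_in_H: "h0 \<in> H" and h0_notin_L: "h0 \<notin> L" and h0_v: "h0 v = v"
  using someI_ex[OF exists_outside_L_fixing_v] unfolding h0_def by blast+

lemma h0_in_G: "h0 \<in> G" and h0_u: "h0 u = u"
  using h0_in_H by (simp_all add: stabilizer_def)

text \<open>b \<cdot> h0 \<cdot> ginv b fixes u and v, so it lies in H; it is not in L, for otherwise
  conjugating back by b (\<open>conj_b_mem\<close>) and using b \<cdot> b \<in> L would give h0 \<in> L.\<close>

lemma b_h0_commutator: "b \<cdot> h0 \<cdot> ginv b \<cdot> ginv h0 \<in> L"
proof -
  let ?k = "b \<cdot> h0 \<cdot> ginv b"
  have "ginv b v = u" "ginv b u = v"
    using ginv_apply[OF b_in_G] b_u b_v by metis+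
  then have k_fixes: "?k u = u" "?k v = v"
    using b_u b_v h0_u h0_v by (simp_all add: mult_apply)
  have k_H: "?k \<in> H"
    using k_fixes b_in_G h0_in_G ginv_closed gmult_closed by (simp add: stabilizer_def)
  have "?k \<notin> L"
  proof
    assume "?k \<in> L"
    then have "b \<cdot> ?k \<cdot> ginv b \<in> L"
      using conj_b_mem k_fixes by blast
    then have "ginv (b \<cdot> b) \<cdot> (b \<cdot> ?k \<cdot> ginv b) \<cdot> (b \<cdot> b) \<in> L"
      using bb_in_L L_mult L_inv by blast
    moreover have "ginv (b \<cdot> b) \<cdot> (b \<cdot> ?k \<cdot> ginv b) \<cdot> (b \<cdot> b) = h0"
      using b_in_G h0_in_G by (intro ext) (simp add: apply_simps ginv_mult)
    ultimately show False
      using h0_notin_L by simp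
  qed
  then show ?thesis
    using H_quotient_mem_iff[OF k_H h0_in_H] h0_notin_L by blast
qed

lemma h0_conj_D: "d \<in> D \<Longrightarrow> h0 \<cdot> d \<cdot> ginv h0 \<in> D"
proof -
  assume "d \<in> D"
  then obtain l1 l2 where d: "l1 \<in> L" "l2 \<in> L" "d = l1 \<cdot> b \<cdot> l2"
    by (auto simp: mem_D_iff)
  let ?c = "b \<cdot> h0 \<cdot> ginv b \<cdot> ginv h0"
  have "h0 \<cdot> d \<cdot> ginv h0 = ((h0 \<cdot> l1 \<cdot> ginv h0) \<cdot> ginv ?c) \<cdot> b \<cdot> (h0 \<cdot> l2 \<cdot> ginv h0)"
    unfolding d(3) using h0_in_G b_in_G L_in_G d
    by (intro ext) (simp add: apply_simps ginv_mult gmult_closed ginv_closed)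
  moreover have "(h0 \<cdot> l1 \<cdot> ginv h0) \<cdot> ginv ?c \<in> L" "h0 \<cdot> l2 \<cdot> ginv h0 \<in> L"
    using H_conj_L[OF h0_in_H] d L_mult L_inv b_h0_commutator by blast+
  ultimately show ?thesis
    using mem_D_iff by metis
qed

lemma h0_inv_conj_D: "d \<in> D \<Longrightarrow> ginv h0 \<cdot> d \<cdot> h0 \<in> D"
proof -
  assume "d \<in> D"
  then obtain l1 l2 where d: "l1 \<in> L" "l2 \<in> L" "d = l1 \<cdot> b \<cdot> l2"
    by (auto simp: mem_D_iff)
  let ?c = "b \<cdot> h0 \<cdot> ginv b \<cdot> ginv h0"
  have conj_inv: "ginv h0 \<cdot> l \<cdot> h0 \<in> L" if "l \<in> L" for l
    using H_conj_L[OF subgroup.m_inv_closed[OF stabilizer_subgroup h0_in_H] that] ginv_ginv[OF h0_in_G]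
    by simp
  have "ginv h0 \<cdot> d \<cdot> h0 = ((ginv h0 \<cdot> l1 \<cdot> h0) \<cdot> (ginv h0 \<cdot> ?c \<cdot> h0)) \<cdot> b \<cdot> (ginv h0 \<cdot> l2 \<cdot> h0)"
    unfolding d(3) using h0_in_G b_in_G L_in_G d by (intro ext) (simp add: apply_simps)
  moreover have "(ginv h0 \<cdot> l1 \<cdot> h0) \<cdot> (ginv h0 \<cdot> ?c \<cdot> h0) \<in> L" "ginv h0 \<cdot> l2 \<cdot> h0 \<in> L"
    using conj_inv d L_mult b_h0_commutator by blast+
  ultimately show ?thesis
    using mem_D_iff by metis
qed

lemma h0_conj_D_iff: "x \<in> G \<Longrightarrow> h0 \<cdot> x \<cdot> ginv h0 \<in> D \<longleftrightarrow> x \<in> D"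
proof
  assume "x \<in> G" "h0 \<cdot> x \<cdot> ginv h0 \<in> D"
  moreover have "ginv h0 \<cdot> (h0 \<cdot> x \<cdot> ginv h0) \<cdot> h0 = x"
    using \<open>x \<in> G\<close> h0_in_G by (intro ext) (simp add: apply_simps)
  ultimately show "x \<in> D"
    using h0_inv_conj_D by metis
qed (rule h0_conj_D)

definition transversal where "transversal x = (SOME g. g \<in> G \<and> g u = x)"

lemma transversal_in_G: "x \<in> V \<Longrightarrow> transversal x \<in> G" and transversal_u: "x \<in> V \<Longrightarrow> transversal x u = x"
  using someI_ex[OF vertex_transitive[unfolded Bex_def]] unfolding transversal_def by blast+

text \<open>The vertex of the cover that corresponds to the right coset L a. The two cosets of L
  inside the coset H a = {g \<in> G. g u = a u} are told apart by one bit, which records whether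
  L a is the coset of the chosen representative \<open>transversal (a u)\<close>.\<close>

definition vtx where "vtx a = (a u, a \<cdot> ginv (transversal (a u)) \<in> L)"

definition rep where "rep Q = (if snd Q then transversal (fst Q) else h0 \<cdot> transversal (fst Q))"

definition Vt where "Vt = V \<times> (UNIV :: bool set)"

definition Et where "Et Q R \<longleftrightarrow> Q \<in> Vt \<and> R \<in> Vt \<and> rep R \<cdot> ginv (rep Q) \<in> D"

lemma fst_vtx: "fst (vtx a) = a u"
  by (simp add: vtx_def)

lemma vtx_eq_iff:
  assumes a: "a \<in> G" and a': "a' \<in> G"
  shows "vtx a = vtx a' \<longleftrightarrow> a \<cdot> ginv a' \<in> L"
proof -
  have same_fibre: "a \<cdot> ginv a' \<in> L \<longleftrightarrow> (a \<cdot> ginv (transversal x) \<in> L \<longleftrightarrow> a' \<cdot> ginv (transversal x) \<in> L)"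
    if "a u = x" "a' u = x" for x
  proof -
    have x: "x \<in> V" using G_closed[OF a u_in_V] that by simp
    have "a \<cdot> ginv (transversal x) \<in> H" "a' \<cdot> ginv (transversal x) \<in> H"
      using that a a' transversal_in_G[OF x] ginv_apply[OF transversal_in_G[OF x], of u] transversal_u[OF x]
      by (auto simp: stabilizer_def mult_apply gmult_closed ginv_closed)
    moreover have "(a \<cdot> ginv (transversal x)) \<cdot> ginv (a' \<cdot> ginv (transversal x)) = a \<cdot> ginv a'"
      using a a' transversal_in_G[OF x] by (intro ext) (simp add: apply_simps ginv_mult ginv_ginv ginv_closed)
    ultimately show ?thesis
      using H_quotient_mem_iff by metis
  qed
  have "a u = a' u" if "a \<cdot> ginv a' \<in> L"
    using L_fixes_u[OF that] apply_ginv[OF a'] by (metis mult_apply)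
  then show ?thesis
    using same_fibre[of "a u"] by (auto simp: vtx_def)
qed

lemma rep_in_G: "Q \<in> Vt \<Longrightarrow> rep Q \<in> G"
  using transversal_in_G h0_in_G gmult_closed by (auto simp: rep_def Vt_def)

lemma vtx_rep: "Q \<in> Vt \<Longrightarrow> vtx (rep Q) = Q"
proof -
  assume "Q \<in> Vt"
  then obtain x i where Q: "Q = (x, i)" "x \<in> V" by (auto simp: Vt_def)
  have "transversal x \<cdot> ginv (transversal x) \<in> L" "(h0 \<cdot> transversal x) \<cdot> ginv (transversal x) = h0"
    using transversal_in_G[OF Q(2)] id_in_L h0_in_G by (simp_all add: one_eq_id) (intro ext, simp add: apply_simps)
  then show ?thesis
    using Q transversal_u h0_u h0_notin_L by (simp add: rep_def vtx_def mult_apply)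
qed

lemma Vt_eq_vtx_image: "Vt = vtx ` G"
proof
  show "vtx ` G \<subseteq> Vt" using G_closed u_in_V by (auto simp: Vt_def vtx_def)
  show "Vt \<subseteq> vtx ` G" using vtx_rep rep_in_G by (metis image_eqI subsetI)
qed

lemma Vt_cases:
  assumes "Q \<in> Vt" obtains a where "a \<in> G" "Q = vtx a"
  using assms Vt_eq_vtx_image by blast

lemma Et_vtx_iff:
  assumes a: "a \<in> G" and a': "a' \<in> G"
  shows "Et (vtx a) (vtx a') \<longleftrightarrow> a' \<cdot> ginv a \<in> D"
proof -
  have reps: "rep (vtx a) \<in> G" "rep (vtx a') \<in> G" "vtx (rep (vtx a)) = vtx a" "vtx (rep (vtx a')) = vtx a'"
    using a a' Vt_eq_vtx_image rep_in_G vtx_rep by auto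
  let ?l = "rep (vtx a) \<cdot> ginv a" and ?l' = "rep (vtx a') \<cdot> ginv a'"
  have "?l \<in> L" "?l' \<in> L"
    using vtx_eq_iff reps a a' by blast+
  moreover have "rep (vtx a') \<cdot> ginv (rep (vtx a)) = ?l' \<cdot> (a' \<cdot> ginv a) \<cdot> ginv ?l"
    using a a' reps by (intro ext) (simp add: apply_simps ginv_mult ginv_ginv ginv_closed)
  ultimately show ?thesis
    using D_conj_L_iff a a' gmult_closed ginv_closed Vt_eq_vtx_image by (simp add: Et_def)
qed

lemma Et_in_Vt: "Et Q R \<Longrightarrow> Q \<in> Vt \<and> R \<in> Vt"
  by (simp add: Et_def)

lemma sgraph_cover: "sgraph Vt Et"
  unfolding sgraph_def
proof (intro conjI allI impI)
  show "finite Vt"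
    using sgraph by (simp add: Vt_def sgraph_def)
  fix Q R
  show "Et Q R \<Longrightarrow> Q \<in> Vt" "Et Q R \<Longrightarrow> R \<in> Vt"
    by (simp_all add: Et_def)
  show "Et Q R \<Longrightarrow> Et R Q"
  proof -
    assume QR: "Et Q R"
    then obtain a a' where a: "a \<in> G" "Q = vtx a" "a' \<in> G" "R = vtx a'"
      using Et_in_Vt Vt_cases by metis
    then have "ginv (a' \<cdot> ginv a) \<in> D"
      using QR Et_vtx_iff ginv_D by simp
    then show "Et R Q"
      using a Et_vtx_iff by (simp add: ginv_mult ginv_ginv ginv_closed)
  qed
  show "\<not> Et Q Q"
  proof
    assume "Et Q Q"
    moreover obtain a where "a \<in> G" "Q = vtx a"
      using Et_in_Vt[OF \<open>Et Q Q\<close>] Vt_cases by metis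
    ultimately show False
      using Et_vtx_iff id_notin_D by (simp add: one_eq_id[symmetric])
  qed
qed

lemma nbhd_vtx: "a \<in> G \<Longrightarrow> nbhd Et (vtx a) = (\<lambda>l. vtx (b \<cdot> l \<cdot> a)) ` L"
proof
  assume a: "a \<in> G"
  have bla: "b \<cdot> l \<cdot> a \<in> G" if "l \<in> L" for l
    using a b_in_G L_in_G[OF that] gmult_closed by blast
  show "(\<lambda>l. vtx (b \<cdot> l \<cdot> a)) ` L \<subseteq> nbhd Et (vtx a)"
  proof
    fix R assume "R \<in> (\<lambda>l. vtx (b \<cdot> l \<cdot> a)) ` L"
    then obtain l where l: "l \<in> L" "R = vtx (b \<cdot> l \<cdot> a)" by blast
    have "(b \<cdot> l \<cdot> a) \<cdot> ginv a = id \<cdot> b \<cdot> l"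
      using a by (intro ext) (simp add: apply_simps)
    moreover have "id \<cdot> b \<cdot> l \<in> D"
      using l(1) id_in_L b_in_D L_mult_D_mult_L by blast
    ultimately show "R \<in> nbhd Et (vtx a)"
      using Et_vtx_iff[OF a bla[OF l(1)]] l(2) by (simp add: nbhd_def)
  qed
  show "nbhd Et (vtx a) \<subseteq> (\<lambda>l. vtx (b \<cdot> l \<cdot> a)) ` L"
  proof
    fix R assume "R \<in> nbhd Et (vtx a)"
    then have "Et (vtx a) R" by (simp add: nbhd_def)
    then obtain a' where a': "a' \<in> G" "R = vtx a'" "a' \<cdot> ginv a \<in> D"
      using Et_in_Vt Vt_cases Et_vtx_iff a by metis
    then obtain l1 l2 where l: "l1 \<in> L" "l2 \<in> L" "a' \<cdot> ginv a = l1 \<cdot> b \<cdot> l2"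
      by (auto simp: mem_D_iff)
    have "a' \<cdot> ginv (b \<cdot> l2 \<cdot> a) = (a' \<cdot> ginv a) \<cdot> ginv (b \<cdot> l2)"
      using a a' b_in_G L_in_G[OF l(2)] by (intro ext) (simp add: apply_simps ginv_mult gmult_closed)
    also have "\<dots> = l1"
      unfolding l(3) using b_in_G L_in_G[OF l(2)] by (intro ext) (simp add: apply_simps ginv_mult)
    finally have "vtx a' = vtx (b \<cdot> l2 \<cdot> a)"
      using vtx_eq_iff[OF a'(1) bla[OF l(2)]] l(1) by simp
    then show "R \<in> (\<lambda>l. vtx (b \<cdot> l \<cdot> a)) ` L"
      using a'(2) l(2) by blast
  qed
qed

lemma fst_vtx_b: "l \<in> L \<Longrightarrow> fst (vtx (b \<cdot> l \<cdot> a)) = a (l v)"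
  using L_fixes_u b_u by (simp add: fst_vtx mult_apply)

text \<open>Two neighbours of vtx a over the same vertex of X come from l, l' \<in> L with
  l \<cdot> ginv l' fixing v; by \<open>conj_b_mem\<close> they are the same coset.\<close>

lemma nbhd_bij: "Q \<in> Vt \<Longrightarrow> bij_betw fst (nbhd Et Q) (nbhd E (fst Q))"
proof -
  assume "Q \<in> Vt"
  then obtain a where a: "a \<in> G" "Q = vtx a" by (rule Vt_cases)
  have "inj_on fst ((\<lambda>l. vtx (b \<cdot> l \<cdot> a)) ` L)"
  proof (rule inj_onI)
    fix R R' assume "R \<in> (\<lambda>l. vtx (b \<cdot> l \<cdot> a)) ` L" "R' \<in> (\<lambda>l. vtx (b \<cdot> l \<cdot> a)) ` L"
      and same_fst: "fst R = fst R'"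
    then obtain l l' where l: "l \<in> L" "l' \<in> L" and R: "R = vtx (b \<cdot> l \<cdot> a)" "R' = vtx (b \<cdot> l' \<cdot> a)"
      by blast
    then have "l v = l' v"
      using same_fst fst_vtx_b G_inj[OF a(1)] by metis
    then have "(l \<cdot> ginv l') v = v"
      using ginv_apply[OF L_in_G[OF l(2)]] by (simp add: mult_apply)
    then have "b \<cdot> (l \<cdot> ginv l') \<cdot> ginv b \<in> L"
      using conj_b_mem L_mult L_inv l by blast
    moreover have "(b \<cdot> l \<cdot> a) \<cdot> ginv (b \<cdot> l' \<cdot> a) = b \<cdot> (l \<cdot> ginv l') \<cdot> ginv b"
      using a b_in_G L_in_G l by (intro ext) (simp add: apply_simps ginv_mult gmult_closed)
    ultimately show "R = R'"
      unfolding R using vtx_eq_iff a(1) b_in_G L_in_G l gmult_closed by simp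
  qed
  moreover have "fst ` (\<lambda>l. vtx (b \<cdot> l \<cdot> a)) ` L = a ` (\<lambda>l. l v) ` L"
    using fst_vtx_b by (force simp: image_image)
  ultimately show ?thesis
    using nbhd_vtx[OF a(1)] a L_nbhd_orbit graph_aut_image_nbhd[OF sgraph G_aut[OF a(1)] u_in_V] fst_vtx
    by (simp add: bij_betw_def)
qed

lemma covering_proj_cover: "covering_proj Vt Et V E fst"
  unfolding covering_proj_def
proof (intro conjI allI impI ballI)
  show "fst ` Vt = V" by (simp add: Vt_def)
  show "x \<in> Vt \<Longrightarrow> bij_betw fst (nbhd Et x) (nbhd E (fst x))" for x
    by (rule nbhd_bij)
  show "E (fst x) (fst y)" if "Et x y" for x y
    using that Et_in_Vt nbhd_bij[of x] by (fastforce simp: bij_betw_def nbhd_def)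
qed

definition lift where "lift g Q = (if Q \<in> Vt then vtx (rep Q \<cdot> g) else Q)"

lemma lift_vtx: "a \<in> G \<Longrightarrow> g \<in> G \<Longrightarrow> lift g (vtx a) = vtx (a \<cdot> g)"
proof -
  assume a: "a \<in> G" and g: "g \<in> G"
  have r: "rep (vtx a) \<in> G" "vtx (rep (vtx a)) = vtx a"
    using a Vt_eq_vtx_image rep_in_G vtx_rep by auto
  have "(rep (vtx a) \<cdot> g) \<cdot> ginv (a \<cdot> g) = rep (vtx a) \<cdot> ginv a"
    using a g r by (intro ext) (simp add: apply_simps ginv_mult)
  then have "vtx (rep (vtx a) \<cdot> g) = vtx (a \<cdot> g)"
    using vtx_eq_iff r a g gmult_closed by simp
  then show ?thesis
    using a Vt_eq_vtx_image by (simp add: lift_def)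
qed

lemma lift_outside: "Q \<notin> Vt \<Longrightarrow> lift g Q = Q"
  by (simp add: lift_def)

lemma lift_closed: "g \<in> G \<Longrightarrow> Q \<in> Vt \<Longrightarrow> lift g Q \<in> Vt"
  using lift_vtx Vt_eq_vtx_image gmult_closed by (metis Vt_cases image_eqI)

lemma lift_comp: "g \<in> G \<Longrightarrow> g' \<in> G \<Longrightarrow> lift g' \<circ> lift g = lift (g \<cdot> g')"
proof
  fix Q assume g: "g \<in> G" "g' \<in> G"
  show "(lift g' \<circ> lift g) Q = lift (g \<cdot> g') Q"
  proof (cases "Q \<in> Vt")
    case True
    then obtain a where a: "a \<in> G" "Q = vtx a" by (rule Vt_cases)
    have "a \<cdot> g \<cdot> g' = a \<cdot> (g \<cdot> g')" by (intro ext) (simp add: mult_apply)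
    then show ?thesis using a g lift_vtx gmult_closed by simp
  qed (simp add: lift_outside)
qed

lemma lift_id: "lift id = id"
proof
  fix Q
  show "lift id Q = id Q"
  proof (cases "Q \<in> Vt")
    case True
    then obtain a where a: "a \<in> G" "Q = vtx a" by (rule Vt_cases)
    have "a \<cdot> id = a" by (intro ext) (simp add: mult_apply)
    then show ?thesis using lift_vtx[OF a(1) id_in_G] a(2) by simp
  qed (simp add: lift_outside)
qed

lemma lift_ginv: "g \<in> G \<Longrightarrow> lift (ginv g) \<circ> lift g = id" "g \<in> G \<Longrightarrow> lift g \<circ> lift (ginv g) = id"
  using lift_comp[of g "ginv g"] lift_comp[of "ginv g" g] ginv_closed lift_id by (simp_all add: one_eq_id)

lemma lift_adj_iff: "g \<in> G \<Longrightarrow> Q \<in> Vt \<Longrightarrow> R \<in> Vt \<Longrightarrow> Et (lift g Q) (lift g R) = Et Q R"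
proof -
  assume g: "g \<in> G" and "Q \<in> Vt" "R \<in> Vt"
  then obtain a a' where a: "a \<in> G" "Q = vtx a" "a' \<in> G" "R = vtx a'"
    using Vt_cases by metis
  have "(a' \<cdot> g) \<cdot> ginv (a \<cdot> g) = a' \<cdot> ginv a"
    using a g by (intro ext) (simp add: apply_simps ginv_mult)
  then show ?thesis
    using a g lift_vtx Et_vtx_iff gmult_closed by simp
qed

lemma lift_graph_aut: "g \<in> G \<Longrightarrow> lift g \<in> graph_aut Vt Et"
  unfolding graph_aut_def
proof (intro CollectI conjI allI impI ballI)
  assume g: "g \<in> G"
  show "bij_betw (lift g) Vt Vt"
    by (rule bij_betw_byWitness[where f' = "lift (ginv g)"])
       (use lift_ginv[OF g] lift_closed g ginv_closed in \<open>auto simp: fun_eq_iff\<close>)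
  show "lift g x = x" if "x \<notin> Vt" for x
    using that by (rule lift_outside)
  show "Et x y = Et (lift g x) (lift g y)" if "x \<in> Vt" "y \<in> Vt" for x y
    using lift_adj_iff g that by simp
qed

lemma fst_lift: "g \<in> G \<Longrightarrow> Q \<in> Vt \<Longrightarrow> fst (lift g Q) = g (fst Q)"
  by (metis Vt_cases fst_vtx lift_vtx mult_apply)

lemma is_lift_lift: "g \<in> G \<Longrightarrow> is_lift Vt Et fst g (lift g)"
  using lift_graph_aut fst_lift by (simp add: is_lift_def)

definition flip where "flip Q = (if Q \<in> Vt then (fst Q, \<not> snd Q) else Q)"

lemma flip_vtx: "a \<in> G \<Longrightarrow> flip (vtx a) = vtx (h0 \<cdot> a)"
proof -
  assume a: "a \<in> G"
  let ?T = "transversal (a u)"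
  have T: "?T \<in> G" "?T u = a u"
    using transversal_in_G transversal_u G_closed[OF a u_in_V] by blast+
  have "a \<cdot> ginv ?T \<in> H"
    using T a ginv_apply[OF T(1), of u] by (auto simp: stabilizer_def mult_apply gmult_closed ginv_closed)
  then have "h0 \<cdot> (a \<cdot> ginv ?T) \<in> L \<longleftrightarrow> a \<cdot> ginv ?T \<notin> L"
    by (rule Gr.index_two_mult_mem_iff[OF index_two_H_L h0_in_H h0_notin_L])
  moreover have "(h0 \<cdot> a) \<cdot> ginv ?T = h0 \<cdot> (a \<cdot> ginv ?T)"
    by (intro ext) (simp add: mult_apply)
  ultimately show ?thesis
    using a h0_u Vt_eq_vtx_image by (simp add: flip_def vtx_def mult_apply)
qed

lemma flip_flip: "flip \<circ> flip = id"
  by (auto simp: flip_def Vt_def fun_eq_iff)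

lemma flip_neq: "Q \<in> Vt \<Longrightarrow> flip Q \<noteq> Q"
  by (simp add: flip_def prod_eq_iff)

lemma flip_graph_aut: "flip \<in> graph_aut Vt Et"
  unfolding graph_aut_def
proof (intro CollectI conjI allI impI ballI)
  show "bij_betw flip Vt Vt"
    by (rule bij_betw_byWitness[where f' = flip]) (auto simp: flip_def Vt_def)
  show "flip x = x" if "x \<notin> Vt" for x
    using that by (simp add: flip_def)
  fix Q R assume "Q \<in> Vt" "R \<in> Vt"
  then obtain a a' where a: "a \<in> G" "Q = vtx a" "a' \<in> G" "R = vtx a'"
    using Vt_cases by metis
  have "(h0 \<cdot> a') \<cdot> ginv (h0 \<cdot> a) = h0 \<cdot> (a' \<cdot> ginv a) \<cdot> ginv h0"
    using a h0_in_G by (intro ext) (simp add: apply_simps ginv_mult)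
  then show "Et Q R = Et (flip Q) (flip R)"
    using a flip_vtx Et_vtx_iff h0_conj_D_iff h0_in_G gmult_closed ginv_closed by simp
qed

lemma flip_cov_trans: "flip \<in> cov_trans Vt Et fst"
  using flip_graph_aut by (simp add: cov_trans_def flip_def)

lemma id_cov_trans: "id \<in> cov_trans Vt Et fst"
  using id_graph_aut by (simp add: cov_trans_def)

lemma fibre_cover: "Q \<in> Vt \<Longrightarrow> R \<in> Vt \<Longrightarrow> fst Q = fst R \<Longrightarrow> R = Q \<or> R = flip Q"
  by (cases Q; cases R) (auto simp: flip_def)

text \<open>Left multiplication by b or its inverse moves vtx a along an edge, and left multiplication
  by an element of L fixes it; since b and L generate G, every vertex is reached from every other.\<close>

lemma reachable_mult:
  assumes "g \<in> generate (pgrp G) (insert b L)"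
  shows "a \<in> G \<Longrightarrow> Et\<^sup>*\<^sup>* (vtx a) (vtx (g \<cdot> a))"
  using assms
proof (induction arbitrary: a)
  case one
  then show ?case by (simp add: one_eq_id mult_apply)
next
  case (incl h)
  then have "h \<in> G" "h \<cdot> a \<in> G"
    using b_in_G L_in_G gmult_closed by auto
  have "(h \<cdot> a) \<cdot> ginv a = h"
    using \<open>a \<in> G\<close> by (intro ext) (simp add: apply_simps)
  then have "Et (vtx a) (vtx (h \<cdot> a)) \<or> vtx (h \<cdot> a) = vtx a"
    using incl Et_vtx_iff vtx_eq_iff b_in_D \<open>h \<cdot> a \<in> G\<close> by auto
  then show ?case by auto
next
  case (inv h)
  then have "ginv h \<in> G" "ginv h \<cdot> a \<in> G"
    using b_in_G L_in_G gmult_closed ginv_closed by auto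
  have "(ginv h \<cdot> a) \<cdot> ginv a = ginv h"
    using \<open>a \<in> G\<close> by (intro ext) (simp add: apply_simps)
  then have "Et (vtx a) (vtx (ginv h \<cdot> a)) \<or> vtx (ginv h \<cdot> a) = vtx a"
    using inv Et_vtx_iff vtx_eq_iff ginv_D[OF b_in_D] L_inv \<open>ginv h \<cdot> a \<in> G\<close> by auto
  then show ?case by auto
next
  case (eng h1 h2)
  have "h2 \<cdot> a \<in> G"
    using eng.hyps(2) generate_b_L \<open>a \<in> G\<close> gmult_closed by blast
  moreover have "h1 \<cdot> h2 \<cdot> a = h1 \<cdot> (h2 \<cdot> a)"
    by (intro ext) (simp add: mult_apply)
  ultimately show ?case
    using eng.IH eng.prems by (metis rtranclp_trans)
qed

lemma connected_cover: "connected_graph Vt Et"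
  unfolding connected_graph_def
proof (intro conjI ballI)
  show "Vt \<noteq> {}" using u_in_V by (auto simp: Vt_def)
  fix Q R assume "Q \<in> Vt" "R \<in> Vt"
  then obtain a a' where a: "a \<in> G" "Q = vtx a" "a' \<in> G" "R = vtx a'"
    using Vt_cases by metis
  have "a' \<cdot> ginv a \<cdot> a = a'"
    using a by (intro ext) (simp add: apply_simps)
  then show "Et\<^sup>*\<^sup>* Q R"
    using reachable_mult[of "a' \<cdot> ginv a" a] generate_b_L a gmult_closed ginv_closed by simp
qed

lemma cov_trans_cover: "cov_trans Vt Et fst = {id, flip}"
proof
  show "{id, flip} \<subseteq> cov_trans Vt Et fst"
    using id_cov_trans flip_cov_trans by blast
  show "cov_trans Vt Et fst \<subseteq> {id, flip}"
  proof
    fix \<gamma> assume "\<gamma> \<in> cov_trans Vt Et fst"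
    then have \<gamma>: "\<gamma> \<in> graph_aut Vt Et" "\<forall>x\<in>Vt. fst (\<gamma> x) = fst x"
      by (auto simp: cov_trans_def)
    let ?Q = "vtx id"
    have Q: "?Q \<in> Vt" using Vt_eq_vtx_image id_in_G by blast
    have "\<gamma> ?Q = ?Q \<or> \<gamma> ?Q = flip ?Q"
      using fibre_cover[OF Q graph_aut_closed[OF \<gamma>(1) Q]] \<gamma>(2) Q by metis
    moreover have "\<gamma> = id" if "\<gamma> ?Q = ?Q"
      by (rule covering_aut_eqI[OF sgraph_cover connected_cover covering_proj_cover \<gamma>(1) id_graph_aut _ Q])
         (use \<gamma>(2) that in auto)
    moreover have "\<gamma> = flip" if "\<gamma> ?Q = flip ?Q"
      by (rule covering_aut_eqI[OF sgraph_cover connected_cover covering_proj_cover \<gamma>(1) flip_graph_aut _ Q])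
         (use \<gamma>(2) that in \<open>auto simp: flip_def\<close>)
    ultimately show "\<gamma> \<in> {id, flip}" by auto
  qed
qed

lemma two_cover_cover: "two_cover Vt Et V E fst"
proof -
  have "flip \<noteq> id"
    using flip_neq Vt_eq_vtx_image id_in_G by (metis id_apply image_eqI)
  moreover have "\<exists>!c. c \<in> {id, flip} \<and> c x = y"
    if "x \<in> Vt" "y \<in> Vt" "fst x = fst y" for x y
    using fibre_cover[OF that] flip_neq[OF that(1)] by auto
  ultimately show ?thesis
    unfolding two_cover_def regular_covering_def cov_trans_cover
    using sgraph_cover covering_proj_cover pgrp_involution_iso_Z2 flip_flip by blast
qed

abbreviation lifts where "lifts \<equiv> lifted_group Vt Et fst G"

lemma lift_in_lifts: "g \<in> G \<Longrightarrow> lift g \<in> lifts"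
  using is_lift_lift by (auto simp: lifted_group_def)

lemma lift_image_subgroup: "subgroup (lift ` G) (pgrp lifts)"
proof
  show "lift ` G \<subseteq> carrier (pgrp lifts)"
    using lift_in_lifts by auto
  show "\<one>\<^bsub>pgrp lifts\<^esub> \<in> lift ` G"
    using lift_id id_in_G by (metis image_eqI pgrp_one)
  fix x y assume "x \<in> lift ` G" "y \<in> lift ` G"
  then obtain g g' where g: "g \<in> G" "x = lift g" "g' \<in> G" "y = lift g'"
    by blast
  then show "x \<otimes>\<^bsub>pgrp lifts\<^esub> y \<in> lift ` G"
    using lift_comp gmult_closed by (simp add: pgrp_mult)
  have "inv\<^bsub>pgrp lifts\<^esub> x = lift (ginv g)"
    using pgrp_inv_eqI[OF lift_in_lifts[OF ginv_closed[OF g(1)]]] lift_ginv g by simp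
  then show "inv\<^bsub>pgrp lifts\<^esub> x \<in> lift ` G"
    using ginv_closed g by simp
qed

lemma lift_image_inter_cov_trans: "lift ` G \<inter> cov_trans Vt Et fst = {id}"
proof
  show "{id} \<subseteq> lift ` G \<inter> cov_trans Vt Et fst"
    using lift_id id_in_G id_cov_trans by force
  show "lift ` G \<inter> cov_trans Vt Et fst \<subseteq> {id}"
  proof
    fix c assume c: "c \<in> lift ` G \<inter> cov_trans Vt Et fst"
    then obtain g where g: "g \<in> G" "c = lift g" by blast
    have "g x = x" if "x \<in> V" for x
      using c g fst_lift[OF g(1), of "(x, True)"] that by (auto simp: cov_trans_def Vt_def)
    then have "g = id"
      using graph_aut_outside[OF G_aut[OF g(1)]] by (intro ext) (metis id_apply)
    then show "c \<in> {id}"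
      using g lift_id by simp
  qed
qed

lemma cov_trans_mult_lift_image: "cov_trans Vt Et fst <#>\<^bsub>pgrp lifts\<^esub> lift ` G = lifts"
proof
  show "cov_trans Vt Et fst <#>\<^bsub>pgrp lifts\<^esub> lift ` G \<subseteq> lifts"
  proof
    fix z assume "z \<in> cov_trans Vt Et fst <#>\<^bsub>pgrp lifts\<^esub> lift ` G"
    then obtain c g where c: "c \<in> cov_trans Vt Et fst" and g: "g \<in> G" and z: "z = lift g \<circ> c"
      by (auto simp: set_mult_def pgrp_mult)
    have c_aut: "c \<in> graph_aut Vt Et" and c_fst: "\<forall>x\<in>Vt. fst (c x) = fst x"
      using c by (auto simp: cov_trans_def)
    have "fst (lift g (c x)) = g (fst x)" if "x \<in> Vt" for x
      using fst_lift[OF g graph_aut_closed[OF c_aut that]] c_fst that by simp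
    then have "is_lift Vt Et fst g z"
      unfolding is_lift_def z using graph_aut_comp[OF c_aut lift_graph_aut[OF g]] by simp
    then show "z \<in> lifts"
      using g by (auto simp: lifted_group_def)
  qed
  show "lifts \<subseteq> cov_trans Vt Et fst <#>\<^bsub>pgrp lifts\<^esub> lift ` G"
  proof
    fix z assume "z \<in> lifts"
    then obtain g where g: "g \<in> G" "is_lift Vt Et fst g z"
      by (auto simp: lifted_group_def)
    then have z: "z \<in> graph_aut Vt Et" "\<forall>x\<in>Vt. fst (z x) = g (fst x)"
      by (auto simp: is_lift_def)
    let ?c = "lift (ginv g) \<circ> z"
    have "fst (?c x) = fst x" if "x \<in> Vt" for x
      using fst_lift[OF ginv_closed[OF g(1)] graph_aut_closed[OF z(1) that]] z(2) that ginv_apply[OF g(1)]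
      by simp
    then have "?c \<in> cov_trans Vt Et fst"
      unfolding cov_trans_def
      using graph_aut_comp[OF z(1) lift_graph_aut[OF ginv_closed[OF g(1)]]] by blast
    moreover have "z = ?c \<otimes>\<^bsub>pgrp lifts\<^esub> lift g"
      using lift_ginv(2)[OF g(1)] by (simp add: pgrp_mult comp_assoc[symmetric])
    ultimately show "z \<in> cov_trans Vt Et fst <#>\<^bsub>pgrp lifts\<^esub> lift ` G"
      using g(1) unfolding set_mult_def by blast
  qed
qed

lemma lift_image_transitive: "\<forall>x\<in>Vt. \<forall>y\<in>Vt. \<exists>c\<in>lift ` G. c x = y"
proof (intro ballI)
  fix x y assume "x \<in> Vt" "y \<in> Vt"
  then obtain a a' where a: "a \<in> G" "x = vtx a" "a' \<in> G" "y = vtx a'"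
    using Vt_cases by metis
  have "a \<cdot> (ginv a \<cdot> a') = a'"
    using a by (intro ext) (simp add: apply_simps)
  then have "lift (ginv a \<cdot> a') x = y"
    using lift_vtx a ginv_closed gmult_closed by metis
  then show "\<exists>c\<in>lift ` G. c x = y"
    using a ginv_closed gmult_closed by blast
qed

theorem good_cover_cover: "good_cover Vt Et V E G fst"
  unfolding good_cover_def split_cover_transitive_complement_def is_complement_def
  using two_cover_cover connected_cover is_lift_lift lift_image_subgroup lift_image_inter_cov_trans
    cov_trans_mult_lift_image lift_image_transitive by blast

end

section \<open>A split cover is a coset graph\<close>

locale split_cover = s_regular_cubic_graph +
  fixes Vt and Et and p
  assumes good_cover: "good_cover Vt Et V E G p"
begin

abbreviation CT where "CT \<equiv> cov_trans Vt Et p"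
abbreviation lifts where "lifts \<equiv> lifted_group Vt Et p G"

lemma sgraph_cover: "sgraph Vt Et" and regular_covering: "regular_covering Vt Et V E p"
  and CT_iso_Z2: "pgrp CT \<cong> integer_mod_group 2" and connected_cover: "connected_graph Vt Et"
  and all_lift: "\<forall>g\<in>G. \<exists>\<gamma>. is_lift Vt Et p g \<gamma>"
  and exists_complement: "\<exists>K. is_complement Vt Et p G K \<and> (\<forall>x\<in>Vt. \<forall>y\<in>Vt. \<exists>c\<in>K. c x = y)"
  using good_cover by (auto simp: good_cover_def two_cover_def split_cover_transitive_complement_def)

lemma covering_proj: "covering_proj Vt Et V E p"
  using regular_covering by (simp add: regular_covering_def)

lemma p_image: "p ` Vt = V" and p_adj: "Et x y \<Longrightarrow> E (p x) (p y)"
  and p_nbhd_bij: "x \<in> Vt \<Longrightarrow> bij_betw p (nbhd Et x) (nbhd E (p x))"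
  using covering_proj by (simp_all add: covering_proj_def)

lemma Et_in_Vt: "Et x y \<Longrightarrow> x \<in> Vt \<and> y \<in> Vt"
  using sgraph_cover by (simp add: sgraph_def)

lemma Et_sym: "Et x y \<Longrightarrow> Et y x"
  using sgraph_cover by (simp add: sgraph_def)

lemma card_fibre: "x \<in> Vt \<Longrightarrow> card {y \<in> Vt. p y = p x} = 2"
proof -
  assume x: "x \<in> Vt"
  have "bij_betw (\<lambda>c. c x) CT {y \<in> Vt. p y = p x}"
  proof (rule bij_betwI')
    have unique: "\<exists>!c. c \<in> CT \<and> c x = y" if "y \<in> Vt" "p x = p y" for y
      using regular_covering x that by (simp add: regular_covering_def)
    have fibre: "c x \<in> Vt" "p (c x) = p x" if "c \<in> CT" for c
      using that x graph_aut_closed by (auto simp: cov_trans_def)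
    show "c x = c' x \<longleftrightarrow> c = c'" if "c \<in> CT" "c' \<in> CT" for c c'
      using unique[OF fibre(1)[OF that(1)] fibre(2)[OF that(1), symmetric]] that fibre[OF that(2)] by auto
    show "c x \<in> {y \<in> Vt. p y = p x}" if "c \<in> CT" for c
      using fibre[OF that] by simp
    show "\<exists>c\<in>CT. y = c x" if "y \<in> {y \<in> Vt. p y = p x}" for y
      using unique[of y] that by auto
  qed
  then show ?thesis
    using iso_same_card[OF CT_iso_Z2] bij_betw_same_card by (fastforce simp: carrier_integer_mod_group)
qed

definition Gb where "Gb = (SOME K. is_complement Vt Et p G K \<and> (\<forall>x\<in>Vt. \<forall>y\<in>Vt. \<exists>c\<in>K. c x = y))"

lemma Gb_complement: "is_complement Vt Et p G Gb" and Gb_transitive: "\<forall>x\<in>Vt. \<forall>y\<in>Vt. \<exists>c\<in>Gb. c x = y"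
  using someI_ex[OF exists_complement] unfolding Gb_def by blast+

lemma Gb_subgroup: "subgroup Gb (pgrp lifts)" and Gb_inter_CT: "Gb \<inter> CT = {id}"
  and CT_mult_Gb: "CT <#>\<^bsub>pgrp lifts\<^esub> Gb = lifts"
  using Gb_complement by (auto simp: is_complement_def)

lemma Gb_is_lift: "\<gamma> \<in> Gb \<Longrightarrow> \<exists>g\<in>G. is_lift Vt Et p g \<gamma>"
  using subgroup.subset[OF Gb_subgroup] by (auto simp: lifted_group_def)

lemma Gb_graph_aut: "\<gamma> \<in> Gb \<Longrightarrow> \<gamma> \<in> graph_aut Vt Et"
  using Gb_is_lift by (auto simp: is_lift_def)

lemma Gb_comp: "\<gamma> \<in> Gb \<Longrightarrow> \<delta> \<in> Gb \<Longrightarrow> \<delta> \<circ> \<gamma> \<in> Gb"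
  using subgroup.m_closed[OF Gb_subgroup] by (simp add: pgrp_mult)

lemma is_lift_inv:
  assumes g: "g \<in> G" and \<gamma>: "is_lift Vt Et p g \<gamma>"
  shows "is_lift Vt Et p (ginv g) (inv_into UNIV \<gamma>)"
proof -
  have aut: "\<gamma> \<in> graph_aut Vt Et" using \<gamma> by (simp add: is_lift_def)
  have inv_aut: "inv_into UNIV \<gamma> \<in> graph_aut Vt Et" by (rule graph_aut_inv[OF aut])
  have "p x = g (p (inv_into UNIV \<gamma> x))" if "x \<in> Vt" for x
    using \<gamma> graph_aut_closed[OF inv_aut that] graph_aut_bij[OF aut]
    by (auto simp: is_lift_def bij_is_surj surj_f_inv_f)
  then show ?thesis
    using inv_aut ginv_apply[OF g] by (simp add: is_lift_def)
qed

text \<open>The inverse in \<open>pgrp lifts\<close> is defined by a description, so it is the inverse map only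
  once that map is known to belong to \<open>lifts\<close>.\<close>

lemma Gb_inv: "\<gamma> \<in> Gb \<Longrightarrow> inv_into UNIV \<gamma> \<in> Gb"
proof -
  assume \<gamma>: "\<gamma> \<in> Gb"
  obtain g where g: "g \<in> G" "is_lift Vt Et p g \<gamma>" using Gb_is_lift[OF \<gamma>] by blast
  have b: "bij \<gamma>" by (rule graph_aut_bij[OF Gb_graph_aut[OF \<gamma>]])
  have "inv_into UNIV \<gamma> \<in> lifts"
    using is_lift_inv[OF g] ginv_closed[OF g(1)] by (auto simp: lifted_group_def)
  moreover have "inv_into UNIV \<gamma> \<circ> \<gamma> = id" "\<gamma> \<circ> inv_into UNIV \<gamma> = id"
    using inj_iff[THEN iffD1, OF bij_is_inj[OF b]] surj_iff[THEN iffD1, OF bij_is_surj[OF b]] by auto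
  ultimately have "inv\<^bsub>pgrp lifts\<^esub> \<gamma> = inv_into UNIV \<gamma>"
    by (rule pgrp_inv_eqI)
  then show ?thesis
    using subgroup.m_inv_closed[OF Gb_subgroup \<gamma>] by simp
qed

lemma exists_lift_in_Gb: "g \<in> G \<Longrightarrow> \<exists>\<gamma>\<in>Gb. is_lift Vt Et p g \<gamma>"
proof -
  assume g: "g \<in> G"
  obtain \<gamma>0 where \<gamma>0: "is_lift Vt Et p g \<gamma>0" using all_lift g by blast
  then have "\<gamma>0 \<in> CT <#>\<^bsub>pgrp lifts\<^esub> Gb"
    using g CT_mult_Gb by (auto simp: lifted_group_def)
  then obtain c \<gamma> where c: "c \<in> CT" and \<gamma>: "\<gamma> \<in> Gb" and \<gamma>0_eq: "\<gamma>0 = \<gamma> \<circ> c"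
    by (auto simp: set_mult_def pgrp_mult)
  have "ginv id = id"
    using Gr.inv_one by (simp add: one_eq_id)
  moreover have "is_lift Vt Et p id c"
    using c is_lift_id_iff by blast
  ultimately have "is_lift Vt Et p id (inv_into UNIV c)"
    using is_lift_inv[OF id_in_G] by metis
  then have "is_lift Vt Et p (g \<circ> id) (\<gamma>0 \<circ> inv_into UNIV c)"
    using is_lift_comp \<gamma>0 by blast
  moreover have "c \<circ> inv_into UNIV c = id"
    using surj_iff[THEN iffD1, OF bij_is_surj[OF graph_aut_bij[of c Vt Et]]] c by (simp add: cov_trans_def)
  then have "\<gamma>0 \<circ> inv_into UNIV c = \<gamma>"
    unfolding \<gamma>0_eq by (simp add: comp_assoc)
  ultimately show ?thesis
    using \<gamma> by auto
qed

text \<open>Two lifts of g in Gb differ by an element of Gb lifting the identity, that is, by an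
  element of Gb \<inter> CT.\<close>

lemma lift_in_Gb_unique:
  assumes g: "g \<in> G" and "\<gamma> \<in> Gb" "is_lift Vt Et p g \<gamma>" "\<delta> \<in> Gb" "is_lift Vt Et p g \<delta>"
  shows "\<gamma> = \<delta>"
proof -
  have "is_lift Vt Et p (g \<circ> ginv g) (\<delta> \<circ> inv_into UNIV \<gamma>)"
    using is_lift_comp is_lift_inv assms by blast
  moreover have "g \<circ> ginv g = id"
    using g Gr.l_inv by (simp add: pgrp_mult one_eq_id)
  ultimately have "\<delta> \<circ> inv_into UNIV \<gamma> \<in> CT"
    using is_lift_id_iff by metis
  moreover have "\<delta> \<circ> inv_into UNIV \<gamma> \<in> Gb"
    using Gb_comp Gb_inv assms by blast
  ultimately have "\<delta> \<circ> inv_into UNIV \<gamma> \<in> Gb \<inter> CT"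
    by blast
  then have "\<delta> \<circ> inv_into UNIV \<gamma> = id"
    using Gb_inter_CT by blast
  moreover have "inv_into UNIV \<gamma> \<circ> \<gamma> = id"
    using inv_o_cancel[OF bij_is_inj[OF graph_aut_bij[OF Gb_graph_aut[OF \<open>\<gamma> \<in> Gb\<close>]]]] .
  then have "\<delta> = (\<delta> \<circ> inv_into UNIV \<gamma>) \<circ> \<gamma>"
    by (simp add: comp_assoc)
  ultimately show ?thesis
    by simp
qed

definition Gb_lift where "Gb_lift g = (THE \<gamma>. \<gamma> \<in> Gb \<and> is_lift Vt Et p g \<gamma>)"

lemma Gb_lift_spec: "g \<in> G \<Longrightarrow> Gb_lift g \<in> Gb \<and> is_lift Vt Et p g (Gb_lift g)"
proof -
  assume g: "g \<in> G"
  then obtain \<gamma> where "\<gamma> \<in> Gb" "is_lift Vt Et p g \<gamma>"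
    using exists_lift_in_Gb by blast
  then have "\<exists>!\<gamma>. \<gamma> \<in> Gb \<and> is_lift Vt Et p g \<gamma>"
    using lift_in_Gb_unique[OF g] by blast
  then show ?thesis
    unfolding Gb_lift_def by (rule theI')
qed

lemma Gb_lift_eqI: "g \<in> G \<Longrightarrow> \<gamma> \<in> Gb \<Longrightarrow> is_lift Vt Et p g \<gamma> \<Longrightarrow> Gb_lift g = \<gamma>"
  using Gb_lift_spec lift_in_Gb_unique by blast

lemma Gb_lift_in_Gb: "g \<in> G \<Longrightarrow> Gb_lift g \<in> Gb"
  using Gb_lift_spec by blast

lemma Gb_lift_graph_aut: "g \<in> G \<Longrightarrow> Gb_lift g \<in> graph_aut Vt Et"
  using Gb_lift_in_Gb Gb_graph_aut by blast

lemma p_Gb_lift: "g \<in> G \<Longrightarrow> x \<in> Vt \<Longrightarrow> p (Gb_lift g x) = g (p x)"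
  using Gb_lift_spec by (simp add: is_lift_def)

lemma Gb_lift_closed: "g \<in> G \<Longrightarrow> x \<in> Vt \<Longrightarrow> Gb_lift g x \<in> Vt"
  by (rule graph_aut_closed[OF Gb_lift_graph_aut])

lemma Gb_lift_adj: "g \<in> G \<Longrightarrow> Et x y \<Longrightarrow> Et (Gb_lift g x) (Gb_lift g y)"
  using graph_aut_adj[OF sgraph_cover Gb_lift_graph_aut] by blast

lemma Gb_lift_mult: "g \<in> G \<Longrightarrow> h \<in> G \<Longrightarrow> Gb_lift (g \<cdot> h) = Gb_lift h \<circ> Gb_lift g"
proof -
  assume g: "g \<in> G" and h: "h \<in> G"
  have "is_lift Vt Et p (g \<cdot> h) (Gb_lift h \<circ> Gb_lift g)"
    using is_lift_comp[OF conjunct2[OF Gb_lift_spec[OF g]] conjunct2[OF Gb_lift_spec[OF h]]]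
    by (simp add: pgrp_mult)
  then show ?thesis
    using Gb_lift_eqI[OF gmult_closed[OF g h]] Gb_comp Gb_lift_in_Gb g h by blast
qed

lemma Gb_lift_id: "Gb_lift id = id"
proof (rule Gb_lift_eqI[OF id_in_G])
  show "id \<in> Gb"
    using subgroup.one_closed[OF Gb_subgroup] by (simp add: pgrp_one)
  show "is_lift Vt Et p id id"
    using id_graph_aut by (simp add: is_lift_def)
qed

lemma Gb_lift_ginv_apply: "g \<in> G \<Longrightarrow> Gb_lift (ginv g) (Gb_lift g x) = x"
proof -
  assume g: "g \<in> G"
  have "g \<cdot> ginv g = id"
    using Gr.r_inv g by (simp add: one_eq_id)
  then show ?thesis
    using Gb_lift_mult[OF g ginv_closed[OF g]] Gb_lift_id by (metis comp_apply id_apply)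
qed

lemma Gb_lift_apply_ginv: "g \<in> G \<Longrightarrow> Gb_lift g (Gb_lift (ginv g) x) = x"
proof -
  assume g: "g \<in> G"
  have "ginv g \<cdot> g = id"
    using Gr.l_inv g by (simp add: one_eq_id)
  then show ?thesis
    using Gb_lift_mult[OF ginv_closed[OF g] g] Gb_lift_id by (metis comp_apply id_apply)
qed

lemma Gb_lift_surj: "\<gamma> \<in> Gb \<Longrightarrow> \<exists>g\<in>G. Gb_lift g = \<gamma>"
proof -
  assume \<gamma>: "\<gamma> \<in> Gb"
  then obtain g where "g \<in> G" "is_lift Vt Et p g \<gamma>"
    using Gb_is_lift by blast
  then show ?thesis
    using Gb_lift_eqI \<gamma> by blast
qed

lemma Gb_lift_transitive: "x \<in> Vt \<Longrightarrow> y \<in> Vt \<Longrightarrow> \<exists>g\<in>G. Gb_lift g x = y"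
proof -
  assume "x \<in> Vt" "y \<in> Vt"
  then obtain \<gamma> where "\<gamma> \<in> Gb" "\<gamma> x = y"
    using Gb_transitive by blast
  then show ?thesis
    using Gb_lift_surj by blast
qed

definition ut where "ut = (SOME x. x \<in> Vt \<and> p x = u)"

lemma ut_in_Vt: "ut \<in> Vt" and p_ut: "p ut = u"
  using someI_ex[of "\<lambda>x. x \<in> Vt \<and> p x = u"] p_image u_in_V unfolding ut_def by blast+

definition vt where "vt = (SOME y. Et ut y \<and> p y = v)"

lemma Et_ut_vt: "Et ut vt" and p_vt: "p vt = v"
proof -
  have "v \<in> p ` nbhd Et ut"
    using p_nbhd_bij[OF ut_in_Vt] edge_uv p_ut by (simp add: bij_betw_def nbhd_def)
  then have "\<exists>y. Et ut y \<and> p y = v"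
    by (auto simp: nbhd_def)
  then show "Et ut vt" "p vt = v"
    using someI_ex[of "\<lambda>y. Et ut y \<and> p y = v"] unfolding vt_def by blast+
qed

lemma vt_in_Vt: "vt \<in> Vt"
  using Et_in_Vt Et_ut_vt by blast

definition L where "L = {g \<in> G. Gb_lift g ut = ut}"

lemma L_in_G: "l \<in> L \<Longrightarrow> l \<in> G" and Gb_lift_L_ut: "l \<in> L \<Longrightarrow> Gb_lift l ut = ut"
  by (simp_all add: L_def)

lemma mult_ginv_in_L_iff: "g \<in> G \<Longrightarrow> h \<in> G \<Longrightarrow> g \<cdot> ginv h \<in> L \<longleftrightarrow> Gb_lift g ut = Gb_lift h ut"
proof -
  assume g: "g \<in> G" and h: "h \<in> G"
  have "g \<cdot> ginv h \<in> L \<longleftrightarrow> Gb_lift (ginv h) (Gb_lift g ut) = ut"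
    using Gb_lift_mult[OF g ginv_closed[OF h]] g h gmult_closed ginv_closed by (simp add: L_def)
  also have "\<dots> \<longleftrightarrow> Gb_lift g ut = Gb_lift h ut"
    using Gb_lift_ginv_apply[OF h] Gb_lift_apply_ginv[OF h] by metis
  finally show ?thesis .
qed

lemma L_subgroup: "subgroup L (pgrp G)"
proof (rule Gr.subgroupI)
  show "L \<subseteq> carrier (pgrp G)" "L \<noteq> {}"
    using id_in_G Gb_lift_id by (auto simp: L_def)
  fix a b assume "a \<in> L" "b \<in> L"
  then show "ginv a \<in> L" "a \<cdot> b \<in> L"
    using Gb_lift_ginv_apply[of a ut] Gb_lift_mult ginv_closed gmult_closed by (auto simp: L_def)
qed

lemma rcos_eq_iff_Gb_lift: "g \<in> G \<Longrightarrow> h \<in> G \<Longrightarrow> L #>\<^bsub>pgrp G\<^esub> g = L #>\<^bsub>pgrp G\<^esub> h \<longleftrightarrow> Gb_lift g ut = Gb_lift h ut"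
  using Gr.rcos_eq_iff[OF L_subgroup] mult_ginv_in_L_iff by simp

lemma L_sub_H: "L \<subseteq> H"
proof
  fix l assume l: "l \<in> L"
  then have "l u = p (Gb_lift l ut)"
    using p_Gb_lift[OF L_in_G ut_in_Vt] p_ut by simp
  then show "l \<in> H"
    using l L_in_G Gb_lift_L_ut p_ut by (simp add: stabilizer_def)
qed

lemma Gb_lift_H_ut: "(\<lambda>h. Gb_lift h ut) ` H = {y \<in> Vt. p y = p ut}"
proof
  show "(\<lambda>h. Gb_lift h ut) ` H \<subseteq> {y \<in> Vt. p y = p ut}"
    using Gb_lift_closed p_Gb_lift ut_in_Vt p_ut by (auto simp: stabilizer_def)
  show "{y \<in> Vt. p y = p ut} \<subseteq> (\<lambda>h. Gb_lift h ut) ` H"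
  proof
    fix y assume "y \<in> {y \<in> Vt. p y = p ut}"
    moreover obtain g where "g \<in> G" "Gb_lift g ut = y"
      using Gb_lift_transitive ut_in_Vt calculation by blast
    ultimately show "y \<in> (\<lambda>h. Gb_lift h ut) ` H"
      using p_Gb_lift[OF _ ut_in_Vt] p_ut by (force simp: stabilizer_def)
  qed
qed

lemma index_H_L: "card (rcosets\<^bsub>(pgrp G)\<lparr>carrier := H\<rparr>\<^esub> L) = 2"
proof -
  have "card (rcosets\<^bsub>(pgrp G)\<lparr>carrier := H\<rparr>\<^esub> L) = card ((\<lambda>h. Gb_lift h ut) ` H)"
    using mult_ginv_in_L_iff stabilizer_G
    by (intro Gr.index_eq_card_image[OF stabilizer_subgroup L_subgroup]) blast
  then show ?thesis
    using Gb_lift_H_ut card_fibre[OF ut_in_Vt] by simp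
qed

lemma L_nbhd_orbit: "(\<lambda>l. Gb_lift l vt) ` L = nbhd Et ut"
proof
  show "(\<lambda>l. Gb_lift l vt) ` L \<subseteq> nbhd Et ut"
    using Gb_lift_adj[OF L_in_G Et_ut_vt] Gb_lift_L_ut by (auto simp: nbhd_def)
  show "nbhd Et ut \<subseteq> (\<lambda>l. Gb_lift l vt) ` L"
  proof
    fix y assume y: "y \<in> nbhd Et ut"
    then have "E (p ut) (p y)"
      using p_adj by (simp add: nbhd_def)
    then have "p y \<in> nbhd E u"
      using p_ut by (simp add: nbhd_def)
    moreover have "(\<lambda>l. l v) ` L = nbhd E u"
      using nbhd_orbit[OF L_subgroup L_sub_H]
        Gr.index_two_square_mem[OF stabilizer_subgroup L_subgroup L_sub_H index_H_L] by blast
    ultimately have "p y \<in> (\<lambda>l. l v) ` L"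
      by simp
    then obtain l where l: "l \<in> L" "p y = l v"
      by (rule imageE)
    have "inj_on p (nbhd Et ut)"
      using p_nbhd_bij[OF ut_in_Vt] by (simp add: bij_betw_def)
    moreover have "p (Gb_lift l vt) = p y"
      using p_Gb_lift[OF L_in_G[OF l(1)] vt_in_Vt] p_vt l(2) by simp
    moreover have "Gb_lift l vt \<in> nbhd Et ut"
      using Gb_lift_adj[OF L_in_G[OF l(1)] Et_ut_vt] Gb_lift_L_ut[OF l(1)] by (simp add: nbhd_def)
    ultimately have "Gb_lift l vt = y"
      using y by (rule inj_onD)
    then show "y \<in> (\<lambda>l. Gb_lift l vt) ` L"
      using l(1) by blast
  qed
qed

definition bt where "bt = (SOME g. g \<in> G \<and> Gb_lift g ut = vt \<and> Gb_lift g vt = ut)"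

lemma exists_arc_swap: "\<exists>g. g \<in> G \<and> Gb_lift g ut = vt \<and> Gb_lift g vt = ut"
proof -
  obtain g where g: "g \<in> G" "Gb_lift g vt = ut"
    using Gb_lift_transitive vt_in_Vt ut_in_Vt by blast
  then have "Gb_lift g ut \<in> nbhd Et ut"
    using Et_sym[OF Gb_lift_adj[OF g(1) Et_ut_vt]] by (simp add: nbhd_def)
  then have "Gb_lift g ut \<in> (\<lambda>l. Gb_lift l vt) ` L"
    using L_nbhd_orbit by simp
  then obtain l where l: "l \<in> L" "Gb_lift g ut = Gb_lift l vt"
    by (rule imageE)
  have l_inv: "ginv l \<in> L" "ginv l \<in> G"
    using subgroup.m_inv_closed[OF L_subgroup l(1)] ginv_closed[OF L_in_G[OF l(1)]] by simp_all
  have "Gb_lift (g \<cdot> ginv l) ut = Gb_lift (ginv l) (Gb_lift l vt)"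
    using Gb_lift_mult[OF g(1) l_inv(2)] l(2) by simp
  also have "\<dots> = vt"
    by (rule Gb_lift_ginv_apply[OF L_in_G[OF l(1)]])
  finally have "Gb_lift (g \<cdot> ginv l) ut = vt" .
  moreover have "Gb_lift (g \<cdot> ginv l) vt = ut"
    using Gb_lift_mult[OF g(1) l_inv(2)] g(2) Gb_lift_L_ut[OF l_inv(1)] by simp
  ultimately show ?thesis
    using g(1) L_in_G[OF l(1)] ginv_closed gmult_closed by blast
qed

lemma bt_in_G: "bt \<in> G" and Gb_lift_bt_ut: "Gb_lift bt ut = vt" and Gb_lift_bt_vt: "Gb_lift bt vt = ut"
  using someI_ex[OF exists_arc_swap] unfolding bt_def by blast+

lemma nbhd_Gb_lift_ut: "k \<in> G \<Longrightarrow> nbhd Et (Gb_lift k ut) = {Gb_lift (d \<cdot> k) ut | d. d \<in> double_coset G L bt}"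
proof -
  assume k: "k \<in> G"
  have "nbhd Et (Gb_lift k ut) = Gb_lift k ` (\<lambda>l. Gb_lift l vt) ` L"
    using graph_aut_image_nbhd[OF sgraph_cover Gb_lift_graph_aut[OF k] ut_in_Vt] L_nbhd_orbit by simp
  also have "\<dots> = {Gb_lift (d \<cdot> k) ut | d. d \<in> double_coset G L bt}"
  proof -
    have Gb_lift_D: "Gb_lift (l1 \<cdot> bt \<cdot> l2 \<cdot> k) ut = Gb_lift k (Gb_lift l2 vt)" if "l1 \<in> L" "l2 \<in> L" for l1 l2
    proof -
      have "l1 \<in> G" "l2 \<in> G" "l1 \<cdot> bt \<in> G" "l1 \<cdot> bt \<cdot> l2 \<in> G"
        using that L_in_G bt_in_G gmult_closed by blast+
      then have "Gb_lift (l1 \<cdot> bt \<cdot> l2 \<cdot> k) ut = Gb_lift k (Gb_lift l2 (Gb_lift bt (Gb_lift l1 ut)))"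
        using Gb_lift_mult bt_in_G k by simp
      then show ?thesis
        using Gb_lift_L_ut[OF that(1)] Gb_lift_bt_ut by simp
    qed
    show ?thesis
    proof
      show "Gb_lift k ` (\<lambda>l. Gb_lift l vt) ` L \<subseteq> {Gb_lift (d \<cdot> k) ut | d. d \<in> double_coset G L bt}"
      proof
        fix z assume "z \<in> Gb_lift k ` (\<lambda>l. Gb_lift l vt) ` L"
        then obtain l where l: "l \<in> L" "z = Gb_lift k (Gb_lift l vt)" by blast
        then have "z = Gb_lift (id \<cdot> bt \<cdot> l \<cdot> k) ut" "id \<cdot> bt \<cdot> l \<in> double_coset G L bt"
          using Gb_lift_D[of id l] subgroup.one_closed[OF L_subgroup] unfolding double_coset_eq
          by (auto simp: one_eq_id)
        then show "z \<in> {Gb_lift (d \<cdot> k) ut | d. d \<in> double_coset G L bt}" by blast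
      qed
      show "{Gb_lift (d \<cdot> k) ut | d. d \<in> double_coset G L bt} \<subseteq> Gb_lift k ` (\<lambda>l. Gb_lift l vt) ` L"
        unfolding double_coset_eq using Gb_lift_D by blast
    qed
  qed
  finally show ?thesis .
qed

lemma double_coset_in_G: "d \<in> double_coset G L bt \<Longrightarrow> d \<in> G"
  using L_in_G bt_in_G gmult_closed by (auto simp: double_coset_eq)

lemma bb_in_L: "bt \<cdot> bt \<in> L"
proof -
  have "Gb_lift (bt \<cdot> bt) ut = Gb_lift bt (Gb_lift bt ut)"
    using Gb_lift_mult[OF bt_in_G bt_in_G] by simp
  then show ?thesis
    using Gb_lift_bt_ut Gb_lift_bt_vt gmult_closed[OF bt_in_G bt_in_G] by (simp add: L_def)
qed

lemma conj_sub_iff: "m \<in> G \<Longrightarrow> m \<in> conj_sub G L bt \<longleftrightarrow> Gb_lift m vt = vt"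
proof -
  assume m: "m \<in> G"
  have "m \<in> conj_sub G L bt \<longleftrightarrow> bt \<cdot> m \<cdot> ginv bt \<in> L"
  proof
    assume "m \<in> conj_sub G L bt"
    then obtain l where "l \<in> L" "m = ginv bt \<cdot> l \<cdot> bt"
      by (auto simp: conj_sub_def)
    moreover have "bt \<cdot> (ginv bt \<cdot> l \<cdot> bt) \<cdot> ginv bt = l" if "l \<in> L" for l
      using bt_in_G L_in_G[OF that] by (intro ext) (simp add: apply_simps)
    ultimately show "bt \<cdot> m \<cdot> ginv bt \<in> L" by simp
  next
    assume "bt \<cdot> m \<cdot> ginv bt \<in> L"
    moreover have "m = ginv bt \<cdot> (bt \<cdot> m \<cdot> ginv bt) \<cdot> bt"
      using m bt_in_G by (intro ext) (simp add: apply_simps)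
    ultimately show "m \<in> conj_sub G L bt"
      by (auto simp: conj_sub_def)
  qed
  also have "\<dots> \<longleftrightarrow> Gb_lift (bt \<cdot> m) ut = Gb_lift bt ut"
    using mult_ginv_in_L_iff[OF gmult_closed[OF bt_in_G m] bt_in_G] .
  also have "\<dots> \<longleftrightarrow> Gb_lift m vt = vt"
    using Gb_lift_mult[OF bt_in_G m] Gb_lift_bt_ut by simp
  finally show ?thesis .
qed

lemma index_L_conj: "card (rcosets\<^bsub>(pgrp G)\<lparr>carrier := L\<rparr>\<^esub> (conj_sub G L bt \<inter> L)) = 3"
proof -
  have "card (rcosets\<^bsub>(pgrp G)\<lparr>carrier := L\<rparr>\<^esub> (conj_sub G L bt \<inter> L)) = card ((\<lambda>l. Gb_lift l vt) ` L)"
  proof (rule Gr.index_eq_card_image[OF L_subgroup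
        Gr.subgroups_Inter_pair[OF conj_sub_subgroup[OF bt_in_G L_subgroup] L_subgroup]])
    show "\<forall>a\<in>L. \<forall>c\<in>L. a \<cdot> ginv c \<in> conj_sub G L bt \<inter> L \<longleftrightarrow> Gb_lift a vt = Gb_lift c vt"
    proof (intro ballI)
      fix a c assume a: "a \<in> L" and c: "c \<in> L"
      have "a \<cdot> ginv c \<in> L"
        using a c subgroup.m_closed[OF L_subgroup] subgroup.m_inv_closed[OF L_subgroup] by blast
      moreover have "Gb_lift (a \<cdot> ginv c) vt = vt \<longleftrightarrow> Gb_lift a vt = Gb_lift c vt"
        using Gb_lift_mult[OF L_in_G[OF a] ginv_closed[OF L_in_G[OF c]]]
          Gb_lift_ginv_apply[OF L_in_G[OF c]] Gb_lift_apply_ginv[OF L_in_G[OF c]] by (metis comp_apply)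
      ultimately show "a \<cdot> ginv c \<in> conj_sub G L bt \<inter> L \<longleftrightarrow> Gb_lift a vt = Gb_lift c vt"
        using conj_sub_iff L_in_G a c ginv_closed gmult_closed by blast
    qed
  qed
  also have "\<dots> = card (nbhd E (p ut))"
    using L_nbhd_orbit p_nbhd_bij[OF ut_in_Vt] bij_betw_same_card by metis
  finally show ?thesis
    using card_nbhd u_in_V p_ut by simp
qed

lemma generate_sub_G: "generate (pgrp G) (insert bt L) \<subseteq> G"
proof -
  have "insert bt L \<subseteq> carrier (pgrp G)"
    using bt_in_G L_in_G by auto
  then show ?thesis
    using Gr.generate_incl by simp
qed

lemma reachable_in_generate:
  "Et\<^sup>*\<^sup>* ut x \<Longrightarrow> \<exists>k\<in>generate (pgrp G) (insert bt L). Gb_lift k ut = x"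
proof (induction rule: rtranclp_induct)
  case base
  have "id \<in> generate (pgrp G) (insert bt L)"
    using generate.one[of "pgrp G" "insert bt L"] by (simp add: one_eq_id)
  then show ?case
    using Gb_lift_id by (metis id_apply)
next
  case (step y z)
  then obtain k where k: "k \<in> generate (pgrp G) (insert bt L)" "Gb_lift k ut = y"
    by blast
  have "k \<in> G"
    using generate_sub_G k(1) by blast
  moreover have "z \<in> nbhd Et (Gb_lift k ut)"
    using step.hyps(2) k(2) by (simp add: nbhd_def)
  ultimately have "z \<in> {Gb_lift (d \<cdot> k) ut | d. d \<in> double_coset G L bt}"
    by (simp only: nbhd_Gb_lift_ut)
  then obtain d where d: "d \<in> double_coset G L bt" "z = Gb_lift (d \<cdot> k) ut"
    by blast
  have "d \<in> generate (pgrp G) (insert bt L)"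
    using d(1) unfolding double_coset_eq by (auto intro: generate.incl generate.eng)
  then have "d \<cdot> k \<in> generate (pgrp G) (insert bt L)"
    using k(1) by (rule generate.eng)
  then show ?case
    using d(2) by (intro bexI[of _ "d \<cdot> k"]) simp_all
qed

lemma generate_bt_L: "generate (pgrp G) (insert bt L) = G"
proof
  show gen_sub: "generate (pgrp G) (insert bt L) \<subseteq> G"
    by (rule generate_sub_G)
  show "G \<subseteq> generate (pgrp G) (insert bt L)"
  proof
    fix g assume g: "g \<in> G"
    have "Et\<^sup>*\<^sup>* ut (Gb_lift g ut)"
      using connected_cover ut_in_Vt Gb_lift_closed[OF g ut_in_Vt] by (simp add: connected_graph_def)
    then obtain k where k: "k \<in> generate (pgrp G) (insert bt L)" "Gb_lift k ut = Gb_lift g ut"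
      using reachable_in_generate by (meson bexE)
    have "k \<in> G"
      using gen_sub k(1) by blast
    then have "g \<cdot> ginv k \<in> L"
      using mult_ginv_in_L_iff[OF g] k(2) by simp
    then have "g \<cdot> ginv k \<in> generate (pgrp G) (insert bt L)"
      by (intro generate.incl) simp
    then have "(g \<cdot> ginv k) \<cdot> k \<in> generate (pgrp G) (insert bt L)"
      using k(1) by (rule generate.eng)
    moreover have "(g \<cdot> ginv k) \<cdot> k = g"
      using g \<open>k \<in> G\<close> by (intro ext) (simp add: apply_simps)
    ultimately show "g \<in> generate (pgrp G) (insert bt L)"
      by simp
  qed
qed

lemma cover_condition_bt_L: "cover_condition G u v bt L"
proof -
  have "bt u = v" "bt v = u"
    using p_Gb_lift[OF bt_in_G ut_in_Vt] p_Gb_lift[OF bt_in_G vt_in_Vt] Gb_lift_bt_ut Gb_lift_bt_vt p_ut p_vt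
    by simp_all
  then show ?thesis
    unfolding cover_condition_def sub_index_def
    using bt_in_G L_subgroup L_sub_H index_H_L bb_in_L generate_bt_L index_L_conj by simp
qed

definition coset_of where "coset_of x = L #>\<^bsub>pgrp G\<^esub> (SOME g. g \<in> G \<and> Gb_lift g ut = x)"

lemma coset_of_Gb_lift: "g \<in> G \<Longrightarrow> coset_of (Gb_lift g ut) = L #>\<^bsub>pgrp G\<^esub> g"
proof -
  assume g: "g \<in> G"
  let ?h = "SOME h. h \<in> G \<and> Gb_lift h ut = Gb_lift g ut"
  have "?h \<in> G \<and> Gb_lift ?h ut = Gb_lift g ut"
    using someI[of "\<lambda>h. h \<in> G \<and> Gb_lift h ut = Gb_lift g ut" g] g by blast
  then show ?thesis
    unfolding coset_of_def using rcos_eq_iff_Gb_lift g by blast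
qed

lemma Vt_cases:
  assumes "x \<in> Vt" obtains g where "g \<in> G" "x = Gb_lift g ut"
  using Gb_lift_transitive[OF ut_in_Vt assms] by metis

lemma bij_coset_of: "bij_betw coset_of Vt (cos_vertices G L)"
  unfolding bij_betw_def cos_vertices_def
proof
  show "inj_on coset_of Vt"
  proof (rule inj_onI)
    fix x y assume "x \<in> Vt" "y \<in> Vt" "coset_of x = coset_of y"
    moreover obtain g h where "g \<in> G" "x = Gb_lift g ut" "h \<in> G" "y = Gb_lift h ut"
      using Vt_cases \<open>x \<in> Vt\<close> \<open>y \<in> Vt\<close> by metis
    ultimately show "x = y"
      using coset_of_Gb_lift rcos_eq_iff_Gb_lift by metis
  qed
  show "coset_of ` Vt = rcosets\<^bsub>pgrp G\<^esub> L"
  proof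
    show "coset_of ` Vt \<subseteq> rcosets\<^bsub>pgrp G\<^esub> L"
      using Vt_cases coset_of_Gb_lift Gr.rcosetsI[OF subgroup.subset[OF L_subgroup]]
      by (metis image_subsetI pgrp_carrier)
    show "rcosets\<^bsub>pgrp G\<^esub> L \<subseteq> coset_of ` Vt"
    proof
      fix C assume "C \<in> rcosets\<^bsub>pgrp G\<^esub> L"
      then obtain g where "g \<in> G" "C = L #>\<^bsub>pgrp G\<^esub> g"
        by (auto simp: RCOSETS_def)
      then show "C \<in> coset_of ` Vt"
        using coset_of_Gb_lift Gb_lift_closed ut_in_Vt by (metis image_eqI)
    qed
  qed
qed

lemma cos_adj_coset_of_iff:
  assumes "x \<in> Vt" "y \<in> Vt"
  shows "cos_adj G L (double_coset G L bt) (coset_of x) (coset_of y) \<longleftrightarrow> Et x y"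
proof -
  obtain g h where g: "g \<in> G" "x = Gb_lift g ut" and h: "h \<in> G" "y = Gb_lift h ut"
    using Vt_cases assms by metis
  have "cos_adj G L (double_coset G L bt) (coset_of x) (coset_of y)
      \<longleftrightarrow> (\<exists>g'\<in>G. \<exists>d\<in>double_coset G L bt.
            L #>\<^bsub>pgrp G\<^esub> g = L #>\<^bsub>pgrp G\<^esub> g' \<and> L #>\<^bsub>pgrp G\<^esub> h = L #>\<^bsub>pgrp G\<^esub> (d \<cdot> g'))"
    unfolding cos_adj_def g h coset_of_Gb_lift[OF g(1)] coset_of_Gb_lift[OF h(1)] ..
  also have "\<dots> \<longleftrightarrow> (\<exists>g'\<in>G. \<exists>d\<in>double_coset G L bt. x = Gb_lift g' ut \<and> y = Gb_lift (d \<cdot> g') ut)"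
    using g h by (simp add: rcos_eq_iff_Gb_lift double_coset_in_G gmult_closed cong: bex_cong)
  also have "\<dots> \<longleftrightarrow> Et x y"
  proof
    assume "\<exists>g'\<in>G. \<exists>d\<in>double_coset G L bt. x = Gb_lift g' ut \<and> y = Gb_lift (d \<cdot> g') ut"
    then obtain g' d where g': "g' \<in> G" "x = Gb_lift g' ut"
      and d: "d \<in> double_coset G L bt" "y = Gb_lift (d \<cdot> g') ut"
      by blast
    then have "y \<in> nbhd Et (Gb_lift g' ut)"
      using nbhd_Gb_lift_ut[OF g'(1)] by auto
    then show "Et x y"
      using g'(2) by (simp add: nbhd_def)
  next
    assume "Et x y"
    then have "y \<in> nbhd Et (Gb_lift g ut)"
      using g(2) by (simp add: nbhd_def)
    then obtain d where "d \<in> double_coset G L bt" "y = Gb_lift (d \<cdot> g) ut"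
      using nbhd_Gb_lift_ut[OF g(1)] by auto
    then show "\<exists>g'\<in>G. \<exists>d\<in>double_coset G L bt. x = Gb_lift g' ut \<and> y = Gb_lift (d \<cdot> g') ut"
      using g by (intro bexI[of _ g] bexI[of _ d]) simp_all
  qed
  finally show ?thesis .
qed

lemma graph_iso_coset_graph: "graph_iso Vt Et (cos_vertices G L) (cos_adj G L (double_coset G L bt))"
  unfolding graph_iso_def using bij_coset_of cos_adj_coset_of_iff by blast

end

theorem theorem4p2:
  fixes V :: "'v set" and E :: "'v \<Rightarrow> 'v \<Rightarrow> bool"
    and G :: "('v \<Rightarrow> 'v) set" and u v :: 'v and s :: nat
  assumes "sgraph V E" and "connected_graph V E" and "cubic V E"
    and "E u v"
    and "aut_group V E G"
    and "s \<in> {2, 3, 5}"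
    and "s_regular V E s G"
  shows "((\<exists>(Vt :: ('v \<times> bool) set) Et p. good_cover Vt Et V E G p)
            \<longleftrightarrow> (\<exists>b L. cover_condition G u v b L))
       \<and> (\<forall>(Vt :: 'w set) Et p. good_cover Vt Et V E G p \<longrightarrow>
            (\<exists>b L. cover_condition G u v b L
               \<and> graph_iso Vt Et (cos_vertices G L) (cos_adj G L (double_coset G L b))))"
proof -
  have graph: "s_regular_cubic_graph V E G u v s"
    using assms by (auto simp: s_regular_cubic_graph_def)
  have cover_from_condition: "\<exists>(Vt :: ('v \<times> bool) set) Et p. good_cover Vt Et V E G p"
    if "cover_condition G u v b L" for b L
    using coset_cover.good_cover_cover[of V E G u v s b L] graph that
    by (auto simp: coset_cover_def coset_cover_axioms_def)
  have condition_from_cover: "\<exists>b L. cover_condition G u v b L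
      \<and> graph_iso Vt Et (cos_vertices G L) (cos_adj G L (double_coset G L b))"
    if "good_cover Vt Et V E G p" for Vt :: "'t set" and Et p
    using split_cover.cover_condition_bt_L split_cover.graph_iso_coset_graph graph that
    by (metis split_cover_axioms.intro split_cover_def)
  show ?thesis
    using cover_from_condition condition_from_cover by meson
qed

end
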